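(* Suppose that $T$ is irreducible with Perron–Frobenius eigenvalue $\lambda_0>1$. There exist a constant $C>0$ and an integer $K$, depending only on $T$, such that for every $k\ge K$ and every pair of admissible $(k+1)$-words $w_1,w_2$, the Perron–Frobenius eigenvalue $\lambda_1$ of $T_k\langle\{w_1,w_2\}\rangle$ satisfies $|\lambda_1-\lambda_0|\le C\lambda_0^{-k/2}$.
   Context: Let $\mathcal{A}$ be a finite alphabet of $r$ symbols and $T=(T_{x,y})$ an $r\times r$ matrix with entries in $\{0,1\}$; $T$ is irreducible if the directed graph on $\mathcal{A}$ with an edge $x\to y$ iff $T_{y,x}=1$ is strongly connected, and its Perron–Frobenius eigenvalue $\lambda_0$ is its spectral radius (a positive eigenvalue). An admissible $k$-word is a string $a_1\cdots a_k$ of symbols with $T_{a_{i+1},a_i}=1$ for $1\le i\le k-1$. $V_k$ is the complex vector space with basis $\{[w]\}$ indexed by admissible $k$-words, and $T_k:V_k\to V_k$ is linear with $T_k([a_1\cdots a_k])=\sum[a_2\cdots a_kx]$, summed over symbols $x$ with $a_2\cdots a_kx$ admissible. For a word $w$, $\beta w$, $\eta w$ are obtained by deleting the last, resp. first, symbol. For an admissible $(k+1)$-word $w$, $E_w:V_k\to V_k$ is linear with $E_w[\beta w]=[\eta w]$ and $E_w[u]=0$ for all other admissible $k$-words $u$. For a set $\mathcal{C}$ of admissible $(k+1)$-words, $T_k\langle\mathcal{C}\rangle=T_k-\sum_{w\in\mathcal{C}}E_w$; its matrix in the word basis is a non-negative $0/1$ matrix (that of $T_k$ with the $(\eta w,\beta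 w)$ entries set to $0$), i.e. the adjacency matrix of the shift obtained by forbidding the words of $\mathcal{C}$, and its Perron–Frobenius eigenvalue is its spectral radius, which is an eigenvalue. *)

theory Defs
  imports Complex_Main
begin

definition irreducible01 :: "nat \<Rightarrow> (nat \<Rightarrow> nat \<Rightarrow> real) \<Rightarrow> bool" where
  "irreducible01 r T \<longleftrightarrow>
     (\<forall>x<r. \<forall>y<r. (x, y) \<in> {(a, b). a < r \<and> b < r \<and> T b a = 1}\<^sup>*)"

definition admissible :: "nat \<Rightarrow> (nat \<Rightarrow> nat \<Rightarrow> real) \<Rightarrow> nat \<Rightarrow> nat list \<Rightarrow> bool" where
  "admissible r T k w \<longleftrightarrow> length w = k \<and> set w \<subseteq> {..<r} \<and>
     (\<forall>i. Suc i < k \<longrightarrow> T (w ! Suc i) (w ! i) = 1)"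

definition adm_words :: "nat \<Rightarrow> (nat \<Rightarrow> nat \<Rightarrow> real) \<Rightarrow> nat \<Rightarrow> nat list set" where
  "adm_words r T k = {w. admissible r T k w}"

text \<open>Matrix of T_k in the word basis: entry (u, v) is the coefficient of [u] in T_k [v],
  i.e. 1 iff u = a_2...a_k x where v = a_1...a_k.\<close>
definition Tk_mat :: "nat \<Rightarrow> (nat \<Rightarrow> nat \<Rightarrow> real) \<Rightarrow> nat \<Rightarrow> nat list \<Rightarrow> nat list \<Rightarrow> real" where
  "Tk_mat r T k u v =
     (if admissible r T k u \<and> admissible r T k v \<and> (\<exists>x. u = tl v @ [x]) then 1 else 0)"

text \<open>Matrix of E_w (w an admissible (k+1)-word): maps [beta w] to [eta w], where
  beta deletes the last symbol (butlast) and eta deletes the first (tl).\<close>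
definition E_mat :: "nat list \<Rightarrow> nat list \<Rightarrow> nat list \<Rightarrow> real" where
  "E_mat w u v = (if u = tl w \<and> v = butlast w then 1 else 0)"

definition Tk_forbid :: "nat \<Rightarrow> (nat \<Rightarrow> nat \<Rightarrow> real) \<Rightarrow> nat \<Rightarrow> nat list set
    \<Rightarrow> nat list \<Rightarrow> nat list \<Rightarrow> real" where
  "Tk_forbid r T k C u v = Tk_mat r T k u v - (\<Sum>w\<in>C. E_mat w u v)"

definition is_eigenvalue :: "'i set \<Rightarrow> ('i \<Rightarrow> 'i \<Rightarrow> real) \<Rightarrow> complex \<Rightarrow> bool" where
  "is_eigenvalue S M \<mu> \<longleftrightarrow> (\<exists>f :: 'i \<Rightarrow> complex. (\<exists>s\<in>S. f s \<noteq> 0) \<and>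
      (\<forall>u\<in>S. (\<Sum>v\<in>S. complex_of_real (M u v) * f v) = \<mu> * f u))"

definition spec_radius :: "'i set \<Rightarrow> ('i \<Rightarrow> 'i \<Rightarrow> real) \<Rightarrow> real" where
  "spec_radius S M = Max (cmod ` {\<mu>. is_eigenvalue S M \<mu>})"

abbreviation pf_eigenvalue :: "'i set \<Rightarrow> ('i \<Rightarrow> 'i \<Rightarrow> real) \<Rightarrow> real" where
  "pf_eigenvalue S M \<equiv> spec_radius S M"

end

(*
  Let x and y be positive right and left Perron eigenvectors of T for its eigenvalue \<lambda>.
  The vector X(u) = x(u\<^sub>1) is a positive eigenvector of T\<^sub>k for \<lambda>, and T\<^sub>k dominates
  T\<^sub>k<C> entrywise, so \<lambda>\<^sub>1 \<le> \<lambda>. For the lower bound fix \<mu> < \<lambda>, \<rho> = 1/\<mu>, and subtract from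
  X, for every forbidden word w, the correction
    D\<^sub>w(u) = x(w\<^sub>1) \<Sum>\<^sub>L \<rho>\<^bsup>k+1-L\<^esup> [the first L letters of u are the last L letters of w].
  The test vector z = X - \<Sum>\<^sub>w D\<^sub>w satisfies T\<^sub>k<C> z \<ge> \<mu> z + (\<lambda> - \<mu>) X - \<rho>\<^sup>k \<Sum>\<^sub>w x(w\<^sub>1),
  and for \<mu> = \<lambda> - C \<lambda>\<^bsup>-k/2\<^esup> the last two terms have a nonnegative sum. Pairing z with the
  weights y(u\<^sub>k) shows that z is positive somewhere, so the Collatz-Wielandt bound gives
  \<lambda>\<^sub>1 \<ge> \<mu>.
*)
theory Submission
  imports Defs "Jordan_Normal_Form.Spectral_Radius"
begin

section \<open>Nonnegative matrices on a finite index set\<close>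

definition matvec :: "'i set \<Rightarrow> ('i \<Rightarrow> 'i \<Rightarrow> real) \<Rightarrow> ('i \<Rightarrow> real) \<Rightarrow> 'i \<Rightarrow> real" where
  "matvec S M f u = (\<Sum>v\<in>S. M u v * f v)"

lemma matvec_mono:
  assumes "\<forall>u\<in>S. \<forall>v\<in>S. 0 \<le> M u v" "\<forall>v\<in>S. f v \<le> g v" "u \<in> S"
  shows "matvec S M f u \<le> matvec S M g u"
  unfolding matvec_def using assms by (intro sum_mono mult_left_mono) auto

lemma matvec_cmult: "matvec S M (\<lambda>v. c * f v) u = c * matvec S M f u"
  unfolding matvec_def by (simp add: sum_distrib_left algebra_simps)

lemma matvec_diff: "matvec S M (\<lambda>v. f v - c * g v) u = matvec S M f u - c * matvec S M g u"
  unfolding matvec_def by (simp add: algebra_simps sum_subtractf sum_distrib_left)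

lemma matvec_sum: "matvec S M (\<lambda>v. \<Sum>m\<in>I. F m v) u = (\<Sum>m\<in>I. matvec S M (F m) u)"
  unfolding matvec_def by (simp add: sum_distrib_left sum.swap[of _ S])

lemma matvec_pow_diff:
  "(matvec S M ^^ m) (\<lambda>v. f v - c * g v) = (\<lambda>u. (matvec S M ^^ m) f u - c * (matvec S M ^^ m) g u)"
  by (induction m) (simp_all add: matvec_diff)

lemma matvec_pow_nonneg:
  assumes M: "\<forall>u\<in>S. \<forall>v\<in>S. 0 \<le> M u v" and d: "\<forall>u\<in>S. 0 \<le> d u"
  shows "\<forall>u\<in>S. 0 \<le> (matvec S M ^^ n) d u"
proof (induction n)
  case (Suc n)
  have "matvec S M (\<lambda>v. 0) u \<le> matvec S M ((matvec S M ^^ n) d) u" if "u \<in> S" for u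
    by (rule matvec_mono[OF M _ that]) (use Suc in auto)
  moreover have "matvec S M (\<lambda>v. 0) u = 0" for u by (simp add: matvec_def)
  ultimately show ?case by simp
qed (use d in simp)

lemma matvec_pow_ge:
  assumes M: "\<forall>u\<in>S. \<forall>v\<in>S. 0 \<le> M u v" and p: "\<forall>u\<in>S. a * p u \<le> matvec S M p u"
    and a: "0 \<le> a"
  shows "\<forall>u\<in>S. a ^ k * p u \<le> (matvec S M ^^ k) p u"
proof (induction k)
  case (Suc k)
  show ?case
  proof
    fix u assume u: "u \<in> S"
    have "a ^ Suc k * p u = a ^ k * (a * p u)" by (simp add: algebra_simps)
    also have "\<dots> \<le> a ^ k * matvec S M p u" using p u a by (intro mult_left_mono) auto
    also have "\<dots> = matvec S M (\<lambda>v. a ^ k * p v) u" by (rule matvec_cmult[symmetric])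
    also have "\<dots> \<le> matvec S M ((matvec S M ^^ k) p) u"
      by (rule matvec_mono[OF M _ u]) (use Suc in auto)
    finally show "a ^ Suc k * p u \<le> (matvec S M ^^ Suc k) p u" by simp
  qed
qed simp

text \<open>To use the spectral theory of the Jordan normal form library, a matrix indexed
  by \<open>S\<close> is transported to a complex \<open>n \<times> n\<close> matrix along an enumeration \<open>e\<close> of \<open>S\<close>.\<close>
definition cmat :: "(nat \<Rightarrow> 'i) \<Rightarrow> nat \<Rightarrow> ('i \<Rightarrow> 'i \<Rightarrow> real) \<Rightarrow> complex mat" where
  "cmat e n M = mat n n (\<lambda>(i, j). complex_of_real (M (e i) (e j)))"

lemma cmat_carrier [simp]: "cmat e n M \<in> carrier_mat n n"
  unfolding cmat_def by simp

lemma cmat_mult_vec: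
  assumes e: "bij_betw e {..<n} S"
  shows "cmat e n M *\<^sub>v vec n (\<lambda>i. f (e i))
    = vec n (\<lambda>i. \<Sum>v\<in>S. complex_of_real (M (e i) v) * f v)"
proof (rule eq_vecI)
  fix i assume "i < dim_vec (vec n (\<lambda>i. \<Sum>v\<in>S. complex_of_real (M (e i) v) * f v))"
  hence i: "i < n" by simp
  have "(cmat e n M *\<^sub>v vec n (\<lambda>i. f (e i))) $ i
      = (\<Sum>j<n. complex_of_real (M (e i) (e j)) * f (e j))"
    using i unfolding cmat_def by (simp add: scalar_prod_def row_def atLeast0LessThan)
  also have "\<dots> = (\<Sum>v\<in>S. complex_of_real (M (e i) v) * f v)"
    using sum.reindex_bij_betw[OF e, of "\<lambda>v. complex_of_real (M (e i) v) * f v"] by simp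
  finally show "(cmat e n M *\<^sub>v vec n (\<lambda>i. f (e i))) $ i
      = vec n (\<lambda>i. \<Sum>v\<in>S. complex_of_real (M (e i) v) * f v) $ i"
    using i by simp
qed (simp add: cmat_def)

lemma cmat_pow_mult_vec:
  assumes e: "bij_betw e {..<n} S"
  shows "(cmat e n M ^\<^sub>m k) *\<^sub>v vec n (\<lambda>i. complex_of_real (g (e i)))
    = vec n (\<lambda>i. complex_of_real ((matvec S M ^^ k) g (e i)))"
proof (induction k arbitrary: g)
  case 0
  show ?case by (simp add: cmat_def)
next
  case (Suc k)
  have "(cmat e n M ^\<^sub>m Suc k) *\<^sub>v vec n (\<lambda>i. complex_of_real (g (e i)))
     = (cmat e n M ^\<^sub>m k) *\<^sub>v (cmat e n M *\<^sub>v vec n (\<lambda>i. complex_of_real (g (e i))))"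
    by (simp add: assoc_mult_mat_vec[of _ n n _ n])
  also have "cmat e n M *\<^sub>v vec n (\<lambda>i. complex_of_real (g (e i)))
      = vec n (\<lambda>i. complex_of_real (matvec S M g (e i)))"
    using cmat_mult_vec[OF e, of M "\<lambda>v. complex_of_real (g v)"] by (simp add: matvec_def)
  finally show ?case by (simp only: Suc.IH funpow_Suc_right comp_apply)
qed

lemma is_eigenvalue_iff_eigenvalue_cmat:
  assumes e: "bij_betw e {..<n} S"
  shows "is_eigenvalue S M \<mu> \<longleftrightarrow> eigenvalue (cmat e n M) \<mu>"
proof
  assume "is_eigenvalue S M \<mu>"
  then obtain f where f0: "\<exists>s\<in>S. f s \<noteq> 0"
    and fe: "\<forall>u\<in>S. (\<Sum>v\<in>S. complex_of_real (M u v) * f v) = \<mu> * f u"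
    unfolding is_eigenvalue_def by blast
  define v where "v = vec n (\<lambda>i. f (e i))"
  have "v \<noteq> 0\<^sub>v n"
  proof
    assume "v = 0\<^sub>v n"
    from f0 obtain s where s: "s \<in> S" "f s \<noteq> 0" by blast
    then obtain i where "i < n" "e i = s" using e by (auto simp: bij_betw_def)
    with \<open>v = 0\<^sub>v n\<close> s show False
      unfolding v_def by (metis index_vec index_zero_vec(1))
  qed
  moreover have "cmat e n M *\<^sub>v v = \<mu> \<cdot>\<^sub>v v"
    unfolding v_def cmat_mult_vec[OF e]
    by (rule eq_vecI) (use fe e in \<open>auto simp: bij_betw_def\<close>)
  ultimately show "eigenvalue (cmat e n M) \<mu>"
    unfolding eigenvalue_def eigenvector_def by (intro exI[of _ v]) (simp add: v_def cmat_def)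
next
  assume "eigenvalue (cmat e n M) \<mu>"
  then obtain v where v: "v \<in> carrier_vec n" "v \<noteq> 0\<^sub>v n" "cmat e n M *\<^sub>v v = \<mu> \<cdot>\<^sub>v v"
    unfolding eigenvalue_def eigenvector_def by (auto simp: cmat_def)
  define f where "f u = v $ (inv_into {..<n} e u)" for u
  have fe: "f (e i) = v $ i" if "i < n" for i
    unfolding f_def using e that by (simp add: bij_betw_def)
  have vf: "v = vec n (\<lambda>i. f (e i))"
    using v(1) fe by auto
  have "\<exists>s\<in>S. f s \<noteq> 0"
  proof (rule ccontr)
    assume "\<not> ?thesis"
    hence "v = 0\<^sub>v n" using v(1) fe e by (intro eq_vecI) (auto simp: bij_betw_def)
    with v(2) show False by simp
  qed
  moreover have "(\<Sum>w\<in>S. complex_of_real (M u w) * f w) = \<mu> * f u" if "u \<in> S" for u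
  proof -
    obtain i where i: "i < n" "u = e i" using e \<open>u \<in> S\<close> by (auto simp: bij_betw_def)
    have "vec n (\<lambda>i. \<Sum>w\<in>S. complex_of_real (M (e i) w) * f w) $ i = (\<mu> \<cdot>\<^sub>v v) $ i"
      using v(3) cmat_mult_vec[OF e, of M f] vf by simp
    thus ?thesis using i v(1) fe by simp
  qed
  ultimately show "is_eigenvalue S M \<mu>" unfolding is_eigenvalue_def by blast
qed

lemma finite_enumeration:
  assumes "finite S"
  obtains e where "bij_betw e {..<card S} S"
  using ex_bij_betw_nat_finite[OF assms] by (auto simp: atLeast0LessThan)

lemma eigenvalues_eq_spectrum_cmat:
  assumes "bij_betw e {..<n} S"
  shows "{\<mu>. is_eigenvalue S M \<mu>} = spectrum (cmat e n M)"
  unfolding spectrum_def using is_eigenvalue_iff_eigenvalue_cmat[OF assms] by auto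

lemma finite_eigenvalues:
  assumes "finite S"
  shows "finite {\<mu>. is_eigenvalue S M \<mu>}"
proof -
  obtain e where "bij_betw e {..<card S} S" using finite_enumeration[OF assms] .
  thus ?thesis
    by (simp add: eigenvalues_eq_spectrum_cmat card_finite_spectrum(1)[OF cmat_carrier])
qed

lemma ex_eigenvalue:
  assumes "finite S" "S \<noteq> {}"
  shows "\<exists>\<mu>. is_eigenvalue S M \<mu>"
proof -
  obtain e where "bij_betw e {..<card S} S" using finite_enumeration[OF assms(1)] .
  moreover have "card S > 0" using assms by auto
  ultimately have "{\<mu>. is_eigenvalue S M \<mu>} \<noteq> {}"
    using spectrum_non_empty[OF cmat_carrier] by (simp add: eigenvalues_eq_spectrum_cmat)
  thus ?thesis by blast
qed

lemma eigenvalue_norm_le_spec_radius: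
  assumes "finite S" "is_eigenvalue S M \<nu>"
  shows "cmod \<nu> \<le> spec_radius S M"
  unfolding spec_radius_def using finite_eigenvalues[OF assms(1)] assms(2) by (auto intro!: Max_ge)

lemma spec_radius_attained:
  assumes "finite S" "S \<noteq> {}"
  obtains \<nu> where "is_eigenvalue S M \<nu>" "cmod \<nu> = spec_radius S M"
proof -
  have "finite (cmod ` {\<nu>. is_eigenvalue S M \<nu>})" using finite_eigenvalues[OF assms(1)] by simp
  moreover have "cmod ` {\<nu>. is_eigenvalue S M \<nu>} \<noteq> {}" using ex_eigenvalue[OF assms] by auto
  ultimately show ?thesis using Max_in that unfolding spec_radius_def by fastforce
qed

lemma spec_radius_nonneg:
  assumes "finite S" "S \<noteq> {}"
  shows "0 \<le> spec_radius S M"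
  by (metis spec_radius_attained[OF assms] norm_ge_zero)

lemma is_eigenvalue_divide:
  assumes "is_eigenvalue S (\<lambda>u v. M u v / c) \<nu>" "c \<noteq> 0"
  shows "is_eigenvalue S M (complex_of_real c * \<nu>)"
proof -
  obtain f where f0: "\<exists>s\<in>S. f s \<noteq> 0"
    and fe: "\<forall>u\<in>S. (\<Sum>v\<in>S. complex_of_real (M u v / c) * f v) = \<nu> * f u"
    using assms(1) unfolding is_eigenvalue_def by blast
  have "(\<Sum>v\<in>S. complex_of_real (M u v) * f v) = complex_of_real c * \<nu> * f u" if "u \<in> S" for u
  proof -
    have "(\<Sum>v\<in>S. complex_of_real (M u v) * f v)
        = complex_of_real c * (\<Sum>v\<in>S. complex_of_real (M u v / c) * f v)"
      unfolding sum_distrib_left using assms(2) by (intro sum.cong) (auto simp: field_simps)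
    thus ?thesis using fe that by simp
  qed
  with f0 show ?thesis unfolding is_eigenvalue_def by blast
qed

lemma spectral_radius_cmat_less_1:
  assumes e: "bij_betw e {..<n} S" and n: "0 < n"
    and ev: "\<And>\<nu>. is_eigenvalue S M \<nu> \<Longrightarrow> cmod \<nu> < 1"
  shows "spectral_radius (cmat e n M) < 1"
proof -
  have "finite (spectrum (cmat e n M))" "spectrum (cmat e n M) \<noteq> {}"
    using card_finite_spectrum(1)[OF cmat_carrier] spectrum_non_empty[OF cmat_carrier n] by blast+
  moreover have "norm \<nu> < 1" if "\<nu> \<in> spectrum (cmat e n M)" for \<nu>
    using ev that by (simp add: eigenvalues_eq_spectrum_cmat[OF e, symmetric])
  ultimately show ?thesis unfolding spectral_radius_def by auto
qed

lemma matvec_pow_bounded: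
  assumes S: "finite S" and ev: "\<And>\<nu>. is_eigenvalue S M \<nu> \<Longrightarrow> cmod \<nu> < 1"
  obtains c where "\<And>k g u. u \<in> S \<Longrightarrow> \<bar>(matvec S M ^^ k) g u\<bar> \<le> c * (\<Sum>v\<in>S. \<bar>g v\<bar>)"
proof (cases "S = {}")
  case True
  then show ?thesis using that by blast
next
  case False
  obtain e where e: "bij_betw e {..<card S} S" using finite_enumeration[OF S] .
  define n where "n = card S"
  define B where "B = cmat e n M"
  have "spectral_radius B < 1"
    unfolding B_def n_def using S False by (intro spectral_radius_cmat_less_1[OF e _ ev]) auto
  then obtain c where c: "\<And>k. norm_bound (B ^\<^sub>m k) c"
    using spectral_radius_jnf_norm_bound_less_1_upper_triangular[of B n] by (auto simp: B_def)
  show ?thesis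
  proof (rule that)
    fix k g u assume "u \<in> S"
    then have "u \<in> e ` {..<n}" using e by (simp add: bij_betw_def n_def)
    then obtain i where i: "i < n" "e i = u" by auto
    have "B ^\<^sub>m k \<in> carrier_mat n n"
      unfolding B_def by (rule pow_carrier_mat[OF cmat_carrier])
    then have dims: "dim_row (B ^\<^sub>m k) = n" "dim_col (B ^\<^sub>m k) = n" by auto
    have "complex_of_real ((matvec S M ^^ k) g u)
        = ((B ^\<^sub>m k) *\<^sub>v vec n (\<lambda>j. complex_of_real (g (e j)))) $ i"
      using cmat_pow_mult_vec[OF e, of M k g] i by (simp add: B_def n_def)
    also have "\<dots> = (\<Sum>j<n. (B ^\<^sub>m k) $$ (i, j) * complex_of_real (g (e j)))"
      using i dims by (simp add: scalar_prod_def atLeast0LessThan)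
    finally have "\<bar>(matvec S M ^^ k) g u\<bar>
        = cmod (\<Sum>j<n. (B ^\<^sub>m k) $$ (i, j) * complex_of_real (g (e j)))"
      by (metis norm_of_real)
    also have "\<dots> \<le> (\<Sum>j<n. norm ((B ^\<^sub>m k) $$ (i, j)) * \<bar>g (e j)\<bar>)"
      using norm_sum[of "\<lambda>j. (B ^\<^sub>m k) $$ (i, j) * complex_of_real (g (e j))"] by (simp add: norm_mult)
    also have "\<dots> \<le> (\<Sum>j<n. c * \<bar>g (e j)\<bar>)"
      using c[of k] i dims unfolding norm_bound_def by (intro sum_mono mult_right_mono) auto
    also have "\<dots> = c * (\<Sum>v\<in>S. \<bar>g v\<bar>)"
      unfolding sum_distrib_left[symmetric] n_def using sum.reindex_bij_betw[OF e, of "\<lambda>v. \<bar>g v\<bar>"]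
      by simp
    finally show "\<bar>(matvec S M ^^ k) g u\<bar> \<le> c * (\<Sum>v\<in>S. \<bar>g v\<bar>)" .
  qed
qed

lemma pos_part_subinvariant:
  assumes M: "\<forall>u\<in>S. \<forall>v\<in>S. 0 \<le> M u v" and \<mu>: "0 \<le> \<mu>"
    and sub: "\<forall>u\<in>S. 0 < z u \<longrightarrow> \<mu> * z u \<le> matvec S M z u"
  shows "\<forall>u\<in>S. \<mu> * max (z u) 0 \<le> matvec S M (\<lambda>v. max (z v) 0) u"
proof
  fix u assume u: "u \<in> S"
  have ge: "matvec S M f u \<le> matvec S M (\<lambda>v. max (z v) 0) u" if "\<forall>v\<in>S. f v \<le> max (z v) 0" for f
    by (rule matvec_mono[OF M that u])
  show "\<mu> * max (z u) 0 \<le> matvec S M (\<lambda>v. max (z v) 0) u"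
  proof (cases "0 < z u")
    case True
    then show ?thesis using sub u ge[of z] by force
  next
    case False
    then show ?thesis using ge[of "\<lambda>v. 0"] by (simp add: matvec_def)
  qed
qed

text \<open>If all eigenvalues had modulus below \<open>\<mu>\<close>, the
  iterates of \<open>M / \<mu>'\<close> for some \<open>\<mu>' < \<mu>\<close> would stay bounded, while those of the positive
  part of \<open>z\<close> grow like \<open>(\<mu> / \<mu>')\<^sup>k\<close>.\<close>
lemma spec_radius_ge_subinvariant:
  assumes S: "finite S" and M: "\<forall>u\<in>S. \<forall>v\<in>S. 0 \<le> M u v"
    and s: "s \<in> S" "0 < z s"
    and sub: "\<forall>u\<in>S. 0 < z u \<longrightarrow> \<mu> * z u \<le> matvec S M z u"
  shows "\<mu> \<le> spec_radius S M"
proof (rule ccontr)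
  assume "\<not> \<mu> \<le> spec_radius S M"
  moreover have "0 \<le> spec_radius S M" using spec_radius_nonneg S s(1) by blast
  ultimately obtain \<mu>' where \<mu>': "spec_radius S M < \<mu>'" "\<mu>' < \<mu>" "0 < \<mu>'"
    using dense[of "spec_radius S M" \<mu>] by force
  define N where "N = (\<lambda>u v. M u v / \<mu>')"
  have N: "\<forall>u\<in>S. \<forall>v\<in>S. 0 \<le> N u v" using M \<mu>' by (auto simp: N_def)
  have "cmod \<nu> < 1" if "is_eigenvalue S N \<nu>" for \<nu>
  proof -
    have "is_eigenvalue S M (complex_of_real \<mu>' * \<nu>)"
      using is_eigenvalue_divide[of S M \<mu>' \<nu>] that \<mu>' by (simp add: N_def)
    then have "cmod (complex_of_real \<mu>' * \<nu>) \<le> spec_radius S M"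
      by (rule eigenvalue_norm_le_spec_radius[OF S])
    then have "\<mu>' * cmod \<nu> \<le> spec_radius S M" using \<mu>'(3) by (simp add: norm_mult)
    then have "\<mu>' * cmod \<nu> < \<mu>' * 1" using \<mu>'(1) by simp
    then show ?thesis using mult_less_cancel_left_pos[OF \<mu>'(3)] by blast
  qed
  then obtain c where c: "\<And>k g u. u \<in> S \<Longrightarrow> \<bar>(matvec S N ^^ k) g u\<bar> \<le> c * (\<Sum>v\<in>S. \<bar>g v\<bar>)"
    using matvec_pow_bounded[OF S] by metis
  define p where "p v = max (z v) 0" for v
  have p_sub: "\<forall>u\<in>S. \<mu> / \<mu>' * p u \<le> matvec S N p u"
  proof
    fix u assume "u \<in> S"
    then have "\<mu> * p u \<le> matvec S M p u"
      unfolding p_def using pos_part_subinvariant[OF M _ sub] \<mu>' by simp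
    then have "\<mu> * p u / \<mu>' \<le> matvec S M p u / \<mu>'"
      using \<mu>'(3) by (rule divide_right_mono[OF _ less_imp_le])
    moreover have "matvec S M p u / \<mu>' = matvec S N p u"
      unfolding matvec_def N_def by (simp add: sum_divide_distrib)
    ultimately show "\<mu> / \<mu>' * p u \<le> matvec S N p u" by simp
  qed
  have grow: "(\<mu> / \<mu>') ^ k * p s \<le> c * (\<Sum>v\<in>S. \<bar>p v\<bar>)" for k
  proof -
    have "(\<mu> / \<mu>') ^ k * p s \<le> (matvec S N ^^ k) p s"
      using matvec_pow_ge[OF N p_sub] \<mu>' s(1) by simp
    also have "\<dots> \<le> c * (\<Sum>v\<in>S. \<bar>p v\<bar>)" using c[OF s(1), of k p] by linarith
    finally show ?thesis .
  qed
  have "1 < \<mu> / \<mu>'" using \<mu>' by simp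
  then obtain k where "c * (\<Sum>v\<in>S. \<bar>p v\<bar>) / p s < (\<mu> / \<mu>') ^ k" using real_arch_pow by blast
  moreover have "0 < p s" using s by (simp add: p_def)
  ultimately have "c * (\<Sum>v\<in>S. \<bar>p v\<bar>) < (\<mu> / \<mu>') ^ k * p s" by (simp add: pos_divide_less_eq)
  with grow[of k] show False by linarith
qed

text \<open>Compare an eigenvector \<open>f\<close> with \<open>X\<close> at an index maximising \<open>\<bar>f\<bar> / X\<close>.\<close>
lemma eigenvalue_norm_le_dominating:
  assumes S: "finite S" and X: "\<forall>u\<in>S. 0 < X u"
    and XN: "\<forall>u\<in>S. matvec S N X u = lam * X u"
    and MN: "\<forall>u\<in>S. \<forall>v\<in>S. 0 \<le> M u v \<and> M u v \<le> N u v"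
    and ev: "is_eigenvalue S M \<nu>"
  shows "cmod \<nu> \<le> lam"
proof -
  obtain f where f0: "\<exists>s\<in>S. f s \<noteq> 0"
    and fe: "\<forall>u\<in>S. (\<Sum>v\<in>S. complex_of_real (M u v) * f v) = \<nu> * f u"
    using ev unfolding is_eigenvalue_def by blast
  define q where "q v = cmod (f v) / X v" for v
  obtain u where u: "u \<in> S" "q u = Max (q ` S)"
    using Max_in[of "q ` S"] S f0 by fastforce
  have qmax: "cmod (f v) \<le> q u * X v" if "v \<in> S" for v
    using Max_ge[of "q ` S" "q v"] S u that X by (auto simp: q_def divide_le_eq)
  obtain s where s: "s \<in> S" "f s \<noteq> 0" using f0 by blast
  have "0 < q s" using s X by (simp add: q_def)
  moreover have "q s \<le> q u" using u S s(1) by simp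
  ultimately have "0 < q u" by linarith
  then have "0 < cmod (f u)" using X u by (simp add: q_def zero_less_divide_iff)
  have "cmod \<nu> * cmod (f u) = cmod (\<Sum>v\<in>S. complex_of_real (M u v) * f v)"
    using fe u by (simp add: norm_mult)
  also have "\<dots> \<le> (\<Sum>v\<in>S. cmod (complex_of_real (M u v) * f v))"
    by (rule norm_sum)
  also have "\<dots> = (\<Sum>v\<in>S. M u v * cmod (f v))"
    using MN u by (intro sum.cong) (auto simp: norm_mult)
  also have "\<dots> \<le> (\<Sum>v\<in>S. N u v * (q u * X v))"
  proof (rule sum_mono)
    fix v assume v: "v \<in> S"
    then have "0 \<le> M u v" "M u v \<le> N u v" using MN u by auto
    then show "M u v * cmod (f v) \<le> N u v * (q u * X v)"
      using qmax[OF v] by (intro mult_mono) auto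
  qed
  also have "\<dots> = q u * matvec S N X u" unfolding matvec_def by (simp add: sum_distrib_left algebra_simps)
  also have "\<dots> = lam * cmod (f u)"
  proof -
    have "q u * X u = cmod (f u)" using X u(1) unfolding q_def by force
    then show ?thesis using XN u(1) by (metis mult.left_commute)
  qed
  finally show ?thesis using \<open>0 < cmod (f u)\<close> by simp
qed

lemma spec_radius_le_dominating:
  assumes "finite S" "S \<noteq> {}" "\<forall>u\<in>S. 0 < X u"
    and "\<forall>u\<in>S. matvec S N X u = lam * X u"
    and "\<forall>u\<in>S. \<forall>v\<in>S. 0 \<le> M u v \<and> M u v \<le> N u v"
  shows "spec_radius S M \<le> lam"
  by (metis spec_radius_attained[OF assms(1,2)] eigenvalue_norm_le_dominating[OF assms(1,3-5)])

section \<open>Perron eigenvectors of irreducible matrices\<close>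

definition irreducible_on :: "'i set \<Rightarrow> ('i \<Rightarrow> 'i \<Rightarrow> real) \<Rightarrow> bool" where
  "irreducible_on S M \<longleftrightarrow> (\<forall>a\<in>S. \<forall>b\<in>S. (a, b) \<in> {(a, b). a \<in> S \<and> b \<in> S \<and> 0 < M b a}\<^sup>*)"

lemma irreducible_on_transpose:
  assumes "irreducible_on S M"
  shows "irreducible_on S (\<lambda>a b. M b a)"
proof -
  have "{(a, b). a \<in> S \<and> b \<in> S \<and> 0 < M a b} = {(a, b). a \<in> S \<and> b \<in> S \<and> 0 < M b a}\<inverse>"
    by auto
  then show ?thesis
    using assms unfolding irreducible_on_def by (simp add: rtrancl_converse)
qed

lemma matvec_pow_pos_along_path:
  assumes S: "finite S" and M: "\<forall>u\<in>S. \<forall>v\<in>S. 0 \<le> M u v" and d: "\<forall>u\<in>S. 0 \<le> d u" and "0 < d j"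
  shows "(j, i) \<in> {(a, b). a \<in> S \<and> b \<in> S \<and> 0 < M b a} ^^ n \<Longrightarrow> 0 < (matvec S M ^^ n) d i"
proof (induction n arbitrary: i)
  case 0
  then show ?case using \<open>0 < d j\<close> by simp
next
  case (Suc n)
  then obtain i' where i': "(j, i') \<in> {(a, b). a \<in> S \<and> b \<in> S \<and> 0 < M b a} ^^ n"
    "i' \<in> S" "i \<in> S" "0 < M i i'"
    by auto
  have nonneg: "\<forall>u\<in>S. 0 \<le> M i u * (matvec S M ^^ n) d u"
    using matvec_pow_nonneg[OF M d] M i'(3) by simp
  have "0 < M i i' * (matvec S M ^^ n) d i'" using Suc.IH[OF i'(1)] i'(4) by simp
  also have "\<dots> \<le> (\<Sum>v\<in>S. M i v * (matvec S M ^^ n) d v)"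
    by (rule member_le_sum) (use nonneg i'(2) S in auto)
  also have "\<dots> = (matvec S M ^^ Suc n) d i" by (simp add: matvec_def)
  finally show ?case .
qed

lemma irreducible_sum_matvec_pow_pos:
  assumes S: "finite S" and irr: "irreducible_on S M" and M: "\<forall>u\<in>S. \<forall>v\<in>S. 0 \<le> M u v"
    and d: "\<forall>u\<in>S. 0 \<le> d u" and j: "j \<in> S" "0 < d j"
  obtains N where "\<forall>u\<in>S. 0 < (\<Sum>m<N. (matvec S M ^^ m) d u)"
proof -
  let ?R = "{(a, b). a \<in> S \<and> b \<in> S \<and> 0 < M b a}"
  define len where "len u = (SOME n. (j, u) \<in> ?R ^^ n)" for u
  have len: "(j, u) \<in> ?R ^^ len u" if "u \<in> S" for u
  proof -
    have "\<exists>n. (j, u) \<in> ?R ^^ n"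
      using irr j that unfolding irreducible_on_def by (simp add: rtrancl_power)
    then show ?thesis unfolding len_def by (rule someI_ex)
  qed
  define N where "N = Suc (Max (len ` S))"
  have "0 < (\<Sum>m<N. (matvec S M ^^ m) d u)" if u: "u \<in> S" for u
  proof (rule sum_pos2)
    show "len u \<in> {..<N}" using S u unfolding N_def by (simp add: le_imp_less_Suc)
    show "0 < (matvec S M ^^ len u) d u"
      by (rule matvec_pow_pos_along_path[OF S M d j(2) len[OF u]])
    show "0 \<le> (matvec S M ^^ m) d u" for m using matvec_pow_nonneg[OF M d] u by blast
  qed simp
  then show ?thesis using that by blast
qed

text \<open>If the subinvariance were strict somewhere, smoothing by \<open>\<Sum>\<^sub>m\<^sub><\<^sub>N M\<^sup>m\<close> would
  make it strict everywhere, and Collatz--Wielandt would exceed the spectral radius.\<close>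
lemma subinvariant_at_spec_radius:
  assumes S: "finite S" and irr: "irreducible_on S M" and M: "\<forall>u\<in>S. \<forall>v\<in>S. 0 \<le> M u v"
    and g: "\<forall>u\<in>S. 0 \<le> g u" and s: "s \<in> S" "0 < g s"
    and sub: "\<forall>u\<in>S. spec_radius S M * g u \<le> matvec S M g u"
  shows "\<forall>u\<in>S. matvec S M g u = spec_radius S M * g u"
proof (rule ccontr)
  define \<rho> where "\<rho> = spec_radius S M"
  define d where "d u = matvec S M g u - \<rho> * g u" for u
  have d: "\<forall>u\<in>S. 0 \<le> d u" using sub by (simp add: d_def \<rho>_def)
  assume "\<not> ?thesis"
  then obtain j where j: "j \<in> S" "0 < d j" using d by (force simp: d_def \<rho>_def)
  obtain N where N: "\<forall>u\<in>S. 0 < (\<Sum>m<N. (matvec S M ^^ m) d u)"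
    using irreducible_sum_matvec_pow_pos[OF S irr M d j] .
  have "N \<noteq> 0"
  proof
    assume "N = 0"
    with N s(1) show False by simp
  qed
  define h where "h u = (\<Sum>m<N. (matvec S M ^^ m) g u)" for u
  define D where "D u = matvec S M h u - \<rho> * h u" for u
  have h: "0 \<le> h u" if "u \<in> S" for u
    unfolding h_def by (rule sum_nonneg) (use matvec_pow_nonneg[OF M g] that in blast)
  have "(matvec S M ^^ 0) g s \<le> h s"
    unfolding h_def using matvec_pow_nonneg[OF M g] s(1) \<open>N \<noteq> 0\<close> by (intro member_le_sum) auto
  then have hs: "0 < h s" using s by simp
  have "D u = (\<Sum>m<N. (matvec S M ^^ m) d u)" for u
  proof -
    have "matvec S M h u = (\<Sum>m<N. (matvec S M ^^ m) (matvec S M g) u)"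
      unfolding h_def matvec_sum by (simp add: funpow_swap1)
    then show ?thesis
      unfolding D_def h_def d_def matvec_pow_diff by (simp add: sum_subtractf sum_distrib_left)
  qed
  then have Dpos: "\<forall>u\<in>S. 0 < D u" using N by simp
  define \<epsilon> where "\<epsilon> = Min ((\<lambda>v. D v / (h v + 1)) ` S)"
  have "0 < D v / (h v + 1)" if "v \<in> S" for v
    using Dpos h[OF that] that by (simp add: add_nonneg_pos)
  then have \<epsilon>: "0 < \<epsilon>"
    unfolding \<epsilon>_def using S s(1) by (subst Min_gr_iff) auto
  have "(\<rho> + \<epsilon>) * h u \<le> matvec S M h u" if u: "u \<in> S" "0 < h u" for u
  proof -
    have "\<epsilon> \<le> D u / (h u + 1)" unfolding \<epsilon>_def using S u(1) by simp
    then have "\<epsilon> * (h u + 1) \<le> D u" using u(2) by (simp add: pos_le_divide_eq)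
    then show ?thesis using \<epsilon> by (simp add: D_def algebra_simps)
  qed
  then have "\<rho> + \<epsilon> \<le> spec_radius S M"
    by (intro spec_radius_ge_subinvariant[where z = h, OF S M s(1) hs]) blast
  with \<epsilon> show False by (simp add: \<rho>_def)
qed

lemma invariant_nonneg_pos:
  assumes S: "finite S" and irr: "irreducible_on S M" and M: "\<forall>u\<in>S. \<forall>v\<in>S. 0 \<le> M u v"
    and g: "\<forall>u\<in>S. 0 \<le> g u" and s: "s \<in> S" "0 < g s"
    and eig: "\<forall>u\<in>S. matvec S M g u = \<rho> * g u"
  shows "\<forall>u\<in>S. 0 < g u"
proof (rule ccontr)
  assume "\<not> ?thesis"
  then obtain i where i: "i \<in> S" "\<not> 0 < g i" by blast
  then have gi: "g i = 0" using g by force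
  let ?R = "{(a, b). a \<in> S \<and> b \<in> S \<and> 0 < M b a}"
  have pred_zero: "g a = 0" if "(a, b) \<in> ?R" "g b = 0" for a b
  proof -
    have ab: "a \<in> S" "b \<in> S" "0 < M b a" using that by auto
    have "\<And>v. v \<in> S \<Longrightarrow> 0 \<le> M b v * g v" using M g ab(2) by simp
    then have "(\<Sum>v\<in>S. M b v * g v) = 0 \<longleftrightarrow> (\<forall>v\<in>S. M b v * g v = 0)"
      by (rule sum_nonneg_eq_0_iff[OF S])
    moreover have "(\<Sum>v\<in>S. M b v * g v) = 0" using eig ab(2) that(2) by (simp add: matvec_def)
    ultimately have "M b a * g a = 0" using ab(1) by simp
    then show ?thesis using ab(3) by simp
  qed
  have "(s, i) \<in> ?R\<^sup>*"
    using irr[unfolded irreducible_on_def, rule_format, OF s(1) i(1)] .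
  then have "g i = 0 \<longrightarrow> g s = 0"
  proof (induction rule: rtrancl_induct)
    case (step y z)
    show ?case using pred_zero[OF step.hyps(2)] step.IH by blast
  qed simp
  with gi s show False by simp
qed

theorem perron_eigenvector:
  assumes S: "finite S" "S \<noteq> {}" and irr: "irreducible_on S M"
    and M: "\<forall>u\<in>S. \<forall>v\<in>S. 0 \<le> M u v"
  obtains x where "\<forall>u\<in>S. 0 < x u" "\<forall>u\<in>S. matvec S M x u = spec_radius S M * x u"
proof -
  obtain \<nu> where \<nu>: "is_eigenvalue S M \<nu>" "cmod \<nu> = spec_radius S M"
    using spec_radius_attained[OF S] .
  then obtain f where f0: "\<exists>s\<in>S. f s \<noteq> 0"
    and fe: "\<forall>u\<in>S. (\<Sum>v\<in>S. complex_of_real (M u v) * f v) = \<nu> * f u"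
    unfolding is_eigenvalue_def by blast
  define g where "g v = cmod (f v)" for v
  obtain s where s: "s \<in> S" "0 < g s" using f0 unfolding g_def by auto
  have g: "\<forall>u\<in>S. 0 \<le> g u" unfolding g_def by simp
  have "spec_radius S M * g u \<le> matvec S M g u" if u: "u \<in> S" for u
  proof -
    have "spec_radius S M * g u = cmod (\<Sum>v\<in>S. complex_of_real (M u v) * f v)"
      using fe u \<nu>(2) by (simp add: g_def norm_mult)
    also have "\<dots> \<le> (\<Sum>v\<in>S. cmod (complex_of_real (M u v) * f v))" by (rule norm_sum)
    also have "\<dots> = matvec S M g u"
      unfolding matvec_def g_def using M u by (intro sum.cong) (auto simp: norm_mult)
    finally show ?thesis .
  qed
  then have eig: "\<forall>u\<in>S. matvec S M g u = spec_radius S M * g u"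
    using subinvariant_at_spec_radius[OF S(1) irr M g s] by blast
  show ?thesis
    by (rule that[OF invariant_nonneg_pos[OF S(1) irr M g s eig] eig])
qed

lemma eigenvalue_eq_of_left_right_eigenvectors:
  assumes S: "finite S" "S \<noteq> {}"
    and x: "\<forall>u\<in>S. 0 < x u" "\<forall>u\<in>S. matvec S M x u = a * x u"
    and y: "\<forall>u\<in>S. 0 < y u" "\<forall>u\<in>S. matvec S (\<lambda>u v. M v u) y u = b * y u"
  shows "a = b"
proof -
  have "a * (\<Sum>u\<in>S. y u * x u) = (\<Sum>u\<in>S. y u * matvec S M x u)"
    using x(2) by (simp add: sum_distrib_left algebra_simps)
  also have "\<dots> = (\<Sum>u\<in>S. \<Sum>v\<in>S. y u * M u v * x v)"
    by (simp add: matvec_def sum_distrib_left mult.assoc)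
  also have "\<dots> = (\<Sum>v\<in>S. \<Sum>u\<in>S. y u * M u v * x v)"
    by (rule sum.swap)
  also have "\<dots> = (\<Sum>v\<in>S. x v * matvec S (\<lambda>u v. M v u) y v)"
    by (simp add: matvec_def sum_distrib_left algebra_simps)
  also have "\<dots> = b * (\<Sum>u\<in>S. y u * x u)"
    using y(2) by (simp add: sum_distrib_left algebra_simps)
  finally have "a * (\<Sum>u\<in>S. y u * x u) = b * (\<Sum>u\<in>S. y u * x u)" .
  moreover have "0 < (\<Sum>u\<in>S. y u * x u)" using S x(1) y(1) by (intro sum_pos) auto
  ultimately show ?thesis by simp
qed

lemma irreducible_on_of_irreducible01:
  assumes T01: "\<forall>x<r. \<forall>y<r. T x y = 0 \<or> T x y = 1" and irr: "irreducible01 r T"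
  shows "irreducible_on {..<r} T"
proof -
  have "{(a, b). a < r \<and> b < r \<and> T b a = 1} = {(a, b). a \<in> {..<r} \<and> b \<in> {..<r} \<and> 0 < T b a}"
    using T01 by force
  then show ?thesis using irr unfolding irreducible01_def irreducible_on_def by simp
qed

section \<open>Admissible words and the word shift\<close>

lemma admissible_Cons_iff:
  "admissible r T (Suc k) (b # w) \<longleftrightarrow> b < r \<and> admissible r T k w \<and> (w \<noteq> [] \<longrightarrow> T (hd w) b = 1)"
proof
  assume a: "admissible r T (Suc k) (b # w)"
  hence l: "length w = k" and s: "b < r" "set w \<subseteq> {..<r}" unfolding admissible_def by auto
  have t: "\<And>i. Suc i < Suc k \<Longrightarrow> T ((b#w) ! Suc i) ((b#w) ! i) = 1" using a unfolding admissible_def by blast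
  have "T (w ! Suc i) (w ! i) = 1" if "Suc i < k" for i using t[of "Suc i"] that by simp
  moreover have "T (hd w) b = 1" if "w \<noteq> []" using t[of 0] that l by (cases k) (auto simp: hd_conv_nth)
  ultimately show "b < r \<and> admissible r T k w \<and> (w \<noteq> [] \<longrightarrow> T (hd w) b = 1)"
    using l s unfolding admissible_def by auto
next
  assume a: "b < r \<and> admissible r T k w \<and> (w \<noteq> [] \<longrightarrow> T (hd w) b = 1)"
  hence l: "length w = k" unfolding admissible_def by auto
  have "T ((b#w) ! Suc i) ((b#w) ! i) = 1" if "Suc i < Suc k" for i
  proof (cases i)
    case 0
    then show ?thesis using a that l by (cases w) auto
  next
    case (Suc j)
    then show ?thesis using a that unfolding admissible_def by auto
  qed
  then show "admissible r T (Suc k) (b # w)" using a l unfolding admissible_def by auto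
qed

lemma admissible_snoc_iff:
  "admissible r T (Suc k) (w @ [c]) \<longleftrightarrow> c < r \<and> admissible r T k w \<and> (w \<noteq> [] \<longrightarrow> T c (last w) = 1)"
proof
  assume a: "admissible r T (Suc k) (w @ [c])"
  hence l: "length w = k" and s: "c < r" "set w \<subseteq> {..<r}" unfolding admissible_def by auto
  have t: "\<And>i. Suc i < Suc k \<Longrightarrow> T ((w @ [c]) ! Suc i) ((w @ [c]) ! i) = 1" using a unfolding admissible_def by blast
  have "T (w ! Suc i) (w ! i) = 1" if "Suc i < k" for i using t[of i] that l by (simp add: nth_append)
  moreover have "T c (last w) = 1" if "w \<noteq> []"
  proof -
    have "T ((w @ [c]) ! Suc (k - 1)) ((w @ [c]) ! (k - 1)) = 1" using t[of "k - 1"] that l by (cases k) auto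
    thus ?thesis using that l by (cases k) (auto simp: nth_append last_conv_nth)
  qed
  ultimately show "c < r \<and> admissible r T k w \<and> (w \<noteq> [] \<longrightarrow> T c (last w) = 1)"
    using l s unfolding admissible_def by auto
next
  assume a: "c < r \<and> admissible r T k w \<and> (w \<noteq> [] \<longrightarrow> T c (last w) = 1)"
  hence l: "length w = k" unfolding admissible_def by auto
  have "T ((w @ [c]) ! Suc i) ((w @ [c]) ! i) = 1" if "Suc i < Suc k" for i
  proof (cases "Suc i < k")
    case True
    then show ?thesis using a l unfolding admissible_def by (auto simp: nth_append)
  next
    case False
    hence "i = k - 1" "k > 0" using that by auto
    then show ?thesis using a l by (auto simp: nth_append last_conv_nth)
  qed
  then show "admissible r T (Suc k) (w @ [c])" using a l unfolding admissible_def by auto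
qed

lemma admissible_take:
  assumes "admissible r T k w" "L \<le> k"
  shows "admissible r T L (take L w)"
  using assms unfolding admissible_def by (auto dest: in_set_takeD)

lemma admissible_drop:
  assumes "admissible r T k w" "n \<le> k"
  shows "admissible r T (k - n) (drop n w)"
  using assms unfolding admissible_def by (auto dest: in_set_dropD simp: add.commute)

lemma finite_adm_words: "finite (adm_words r T k)"
proof -
  have "adm_words r T k \<subseteq> {w. set w \<subseteq> {..<r} \<and> length w = k}"
    unfolding adm_words_def admissible_def by auto
  thus ?thesis using finite_lists_length_eq[of "{..<r}" k] by (auto intro: finite_subset)
qed

lemma Tk_mat_predecessors:
  assumes k: "k \<ge> 2" and u: "u \<in> adm_words r T k"
  shows "{v \<in> adm_words r T k. \<exists>c. u = tl v @ [c]} = (\<lambda>b. b # butlast u) ` {b. b < r \<and> T (hd u) b = 1}"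
proof -
  have ua: "admissible r T k u" using u by (simp add: adm_words_def)
  have lu: "length u = k" using ua by (simp add: admissible_def)
  have une: "u \<noteq> []" using lu k by auto
  have ubl: "u = butlast u @ [last u]" using une by simp
  have bune: "butlast u \<noteq> []" using lu k by (cases u) auto
  have hdb: "hd (butlast u) = hd u" using bune ubl by (metis hd_append2)
  have ua': "admissible r T (Suc (k - 1)) (butlast u @ [last u])" using ua ubl k by simp
  hence bua: "admissible r T (k - 1) (butlast u)" by (simp only: admissible_snoc_iff)
  show ?thesis
  proof (intro equalityI subsetI)
    fix v assume "v \<in> {v \<in> adm_words r T k. \<exists>c. u = tl v @ [c]}"
    then obtain c where va: "admissible r T k v" and uc: "u = tl v @ [c]" by (auto simp: adm_words_def)
    have lv: "length v = k" using va by (simp add: admissible_def)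
    have vne: "v \<noteq> []" using lv k by auto
    have vv: "v = hd v # tl v" using vne by simp
    have "admissible r T (Suc (k - 1)) (hd v # tl v)" using va vv k by simp
    hence h: "hd v < r" "tl v \<noteq> [] \<longrightarrow> T (hd (tl v)) (hd v) = 1" by (simp_all only: admissible_Cons_iff) blast+
    have tlne: "tl v \<noteq> []" using lv k by (cases v) auto
    have "hd (tl v) = hd u" using uc tlne by simp
    moreover have "tl v = butlast u" using uc by simp
    ultimately show "v \<in> (\<lambda>b. b # butlast u) ` {b. b < r \<and> T (hd u) b = 1}"
      using h tlne vv by (intro image_eqI[of _ _ "hd v"]) auto
  next
    fix v assume "v \<in> (\<lambda>b. b # butlast u) ` {b. b < r \<and> T (hd u) b = 1}"
    then obtain b where b: "b < r" "T (hd u) b = 1" and v: "v = b # butlast u" by auto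
    have "admissible r T (Suc (k - 1)) (b # butlast u)"
      by (simp only: admissible_Cons_iff) (use b bua bune hdb in auto)
    hence "admissible r T k v" using v k by simp
    moreover have "u = tl v @ [last u]" using v ubl by simp
    ultimately show "v \<in> {v \<in> adm_words r T k. \<exists>c. u = tl v @ [c]}" by (auto simp: adm_words_def)
  qed
qed

lemma matvec_Tk_mat:
  assumes k: "k \<ge> 2" and u: "u \<in> adm_words r T k"
  shows "matvec (adm_words r T k) (Tk_mat r T k) F u = (\<Sum>b\<in>{b. b < r \<and> T (hd u) b = 1}. F (b # butlast u))"
proof -
  have ua: "admissible r T k u" using u by (simp add: adm_words_def)
  have "(\<Sum>v\<in>adm_words r T k. Tk_mat r T k u v * F v) = (\<Sum>v\<in>adm_words r T k. if \<exists>c. u = tl v @ [c] then F v else 0)"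
    using ua by (intro sum.cong) (auto simp: Tk_mat_def adm_words_def)
  also have "\<dots> = (\<Sum>v\<in>{v \<in> adm_words r T k. \<exists>c. u = tl v @ [c]}. F v)"
    by (rule sum.inter_filter[symmetric]) (rule finite_adm_words)
  also have "\<dots> = (\<Sum>v\<in>(\<lambda>b. b # butlast u) ` {b. b < r \<and> T (hd u) b = 1}. F v)"
    by (simp only: Tk_mat_predecessors[OF k u])
  also have "\<dots> = (\<Sum>b\<in>{b. b < r \<and> T (hd u) b = 1}. F (b # butlast u))"
    by (rule sum.reindex_cong[of "\<lambda>b. b # butlast u"]) (auto simp: inj_on_def)
  finally show ?thesis unfolding matvec_def .
qed

lemma sum_indicator_le_one:
  assumes "finite B" "\<And>b. b \<in> B \<Longrightarrow> Q b \<Longrightarrow> b = c"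
  shows "(\<Sum>b\<in>B. if Q b then (1::real) else 0) \<le> 1"
proof -
  have "(\<Sum>b\<in>B. if Q b then (1::real) else 0) = (\<Sum>b\<in>{b\<in>B. Q b}. 1)"
    by (rule sum.inter_filter[symmetric]) (rule assms(1))
  also have "\<dots> = real (card {b\<in>B. Q b})" by simp
  also have "card {b\<in>B. Q b} \<le> card {c}" using assms by (intro card_mono) auto
  finally show ?thesis by simp
qed

lemma admissible_hd_less: "admissible r T k u \<Longrightarrow> 1 \<le> k \<Longrightarrow> hd u < r"
  unfolding admissible_def by (cases u) auto

lemma admissible_last_less: "admissible r T k u \<Longrightarrow> 1 \<le> k \<Longrightarrow> last u < r"
  unfolding admissible_def by (cases u rule: rev_cases) auto

lemma butlast_adm_words:
  assumes w: "admissible r T (k + 1) w" and k1: "k \<ge> 1"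
  shows "butlast w \<in> adm_words r T k" "hd (butlast w) = hd w"
proof -
  have lw: "length w = k + 1" using w by (simp add: admissible_def)
  have "butlast w = take k w" using lw by (simp add: butlast_conv_take)
  thus "butlast w \<in> adm_words r T k" using admissible_take[OF w, of k] by (simp add: adm_words_def)
  show "hd (butlast w) = hd w" using lw k1 by (cases w) auto
qed

lemma matvec_E_mat:
  assumes k: "k \<ge> 1" and w: "admissible r T (k + 1) w"
  shows "matvec (adm_words r T k) (E_mat w) F u = (if u = tl w then F (butlast w) else 0)"
proof -
  have bw: "butlast w \<in> adm_words r T k" by (rule butlast_adm_words(1)[OF w k])
  have "(\<Sum>v\<in>adm_words r T k. E_mat w u v * F v)
      = (\<Sum>v\<in>adm_words r T k. if v = butlast w then (if u = tl w then F v else 0) else 0)"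
    unfolding E_mat_def by (intro sum.cong) auto
  also have "\<dots> = (if u = tl w then F (butlast w) else 0)"
    using bw finite_adm_words by (simp add: sum.delta)
  finally show ?thesis unfolding matvec_def .
qed

lemma Tk_forbid_bounds:
  assumes k: "1 \<le> k" and C: "finite C" "C \<subseteq> adm_words r T (k + 1)"
    and u: "u \<in> adm_words r T k" and v: "v \<in> adm_words r T k"
  shows "0 \<le> Tk_forbid r T k C u v \<and> Tk_forbid r T k C u v \<le> Tk_mat r T k u v"
proof (cases "\<exists>w\<in>C. u = tl w \<and> v = butlast w")
  case True
  then obtain w0 where w0: "w0 \<in> C" "u = tl w0" "v = butlast w0" by blast
  have unique: "w = hd v # u" if "w \<in> C" "u = tl w \<and> v = butlast w" for w
  proof -
    have "admissible r T (k + 1) w" using C that(1) by (auto simp: adm_words_def)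
    then have "length w = k + 1" "hd (butlast w) = hd w"
      using butlast_adm_words(2)[OF _ k] by (auto simp: admissible_def)
    then show ?thesis using that(2) by (cases w) auto
  qed
  have "(\<Sum>w\<in>C. E_mat w u v) \<le> 1"
    unfolding E_mat_def by (rule sum_indicator_le_one[OF C(1) unique])
  moreover have "0 \<le> (\<Sum>w\<in>C. E_mat w u v)" unfolding E_mat_def by (intro sum_nonneg) auto
  moreover have "Tk_mat r T k u v = 1"
  proof -
    have "length w0 = k + 1" using C w0(1) by (auto simp: adm_words_def admissible_def)
    then have "u = tl v @ [last w0]" using w0(2,3) k by (cases w0) (auto simp: butlast_tl)
    then show ?thesis using u v by (auto simp: Tk_mat_def adm_words_def)
  qed
  ultimately show ?thesis by (simp add: Tk_forbid_def)
next
  case False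
  then have "(\<Sum>w\<in>C. E_mat w u v) = 0" unfolding E_mat_def by (intro sum.neutral) auto
  then show ?thesis by (simp add: Tk_forbid_def Tk_mat_def)
qed

lemma matvec_Tk_forbid_eq:
  "matvec S (Tk_forbid r T k C) f u = matvec S (Tk_mat r T k) f u - (\<Sum>w\<in>C. matvec S (E_mat w) f u)"
  unfolding matvec_def Tk_forbid_def
  by (simp add: left_diff_distrib sum_subtractf sum_distrib_right sum.swap[of _ C])

lemma adm_extensions_Suc:
  assumes L: "1 \<le> L"
  shows "{u \<in> adm_words r T (L + Suc m). take L u = s}
    = (\<lambda>(u, c). u @ [c]) ` (SIGMA u:{u \<in> adm_words r T (L + m). take L u = s}. {c. c < r \<and> T c (last u) = 1})"
proof (intro equalityI subsetI)
  fix u' assume "u' \<in> {u \<in> adm_words r T (L + Suc m). take L u = s}"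
  then have u': "admissible r T (Suc (L + m)) u'" "take L u' = s" by (auto simp: adm_words_def)
  then have len: "length u' = Suc (L + m)" by (simp add: admissible_def)
  then have eq: "u' = butlast u' @ [last u']" "butlast u' \<noteq> []"
    using L by (auto simp flip: length_0_conv)
  then have "last u' < r" "admissible r T (L + m) (butlast u')" "T (last u') (last (butlast u')) = 1"
    using u'(1) admissible_snoc_iff[of r T "L + m" "butlast u'" "last u'"] by auto
  moreover have "take L (butlast u') = s" using u'(2) len by (simp add: take_butlast)
  ultimately show "u' \<in> (\<lambda>(u, c). u @ [c]) `
      (SIGMA u:{u \<in> adm_words r T (L + m). take L u = s}. {c. c < r \<and> T c (last u) = 1})"
    using eq(1) by (intro image_eqI[of _ _ "(butlast u', last u')"]) (auto simp: adm_words_def)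
next
  fix u' assume "u' \<in> (\<lambda>(u, c). u @ [c]) `
      (SIGMA u:{u \<in> adm_words r T (L + m). take L u = s}. {c. c < r \<and> T c (last u) = 1})"
  then obtain u c where uc: "u' = u @ [c]" "admissible r T (L + m) u" "take L u = s"
    "c < r" "T c (last u) = 1" by (auto simp: adm_words_def)
  then have "admissible r T (Suc (L + m)) (u @ [c])" by (simp add: admissible_snoc_iff)
  moreover have "take L (u @ [c]) = s" using uc(2,3) by (simp add: admissible_def)
  ultimately show "u' \<in> {u \<in> adm_words r T (L + Suc m). take L u = s}" using uc(1) by (simp add: adm_words_def)
qed

definition overlap :: "nat \<Rightarrow> nat list \<Rightarrow> nat \<Rightarrow> nat list \<Rightarrow> real" where
  "overlap k w L u = (if take L u = drop (k + 1 - L) w then 1 else 0)"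

lemma overlap_Cons_le:
  assumes k: "k \<ge> 2" and u: "u \<in> adm_words r T k" and w: "admissible r T (k + 1) w"
    and L: "1 \<le> L'" "L' < k"
  shows "(\<Sum>b\<in>{b. b < r \<and> T (hd u) b = 1}. overlap k w (Suc L') (b # butlast u)) \<le> overlap k w L' u"
proof -
  have lu: "length u = k" using u by (simp add: adm_words_def admissible_def)
  have lw: "length w = k + 1" using w by (simp add: admissible_def)
  have tb: "take L' (butlast u) = take L' u" using L lu by (simp add: take_butlast)
  have dw: "drop (k + 1 - Suc L') w = w ! (k - L') # drop (k + 1 - L') w"
  proof -
    have "k - L' < length w" using lw by simp
    hence "drop (k - L') w = w ! (k - L') # drop (Suc (k - L')) w" by (rule Cons_nth_drop_Suc[symmetric])
    moreover have "Suc (k - L') = k + 1 - L'" using L by simp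
    ultimately show ?thesis by simp
  qed
  have eq: "overlap k w (Suc L') (b # butlast u) = (if b = w ! (k - L') \<and> take L' u = drop (k + 1 - L') w then 1 else 0)" for b
    unfolding overlap_def using tb dw by simp
  show ?thesis
  proof (cases "take L' u = drop (k + 1 - L') w")
    case True
    have "(\<Sum>b\<in>{b. b < r \<and> T (hd u) b = 1}. overlap k w (Suc L') (b # butlast u))
        = (\<Sum>b\<in>{b. b < r \<and> T (hd u) b = 1}. if b = w ! (k - L') \<and> take L' u = drop (k + 1 - L') w then 1 else 0)"
      using eq by simp
    also have "\<dots> \<le> 1" by (rule sum_indicator_le_one) auto
    finally show ?thesis using True by (simp add: overlap_def)
  next
    case False
    then show ?thesis using eq by (simp add: overlap_def)
  qed
qed

lemma overlap_one_Cons_le: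
  assumes k: "k \<ge> 2" and u: "u \<in> adm_words r T k" and w: "admissible r T (k + 1) w"
  shows "(\<Sum>b\<in>{b. b < r \<and> T (hd u) b = 1}. overlap k w 1 (b # butlast u)) \<le> 1"
proof -
  have "(\<Sum>b\<in>{b. b < r \<and> T (hd u) b = 1}. overlap k w 1 (b # butlast u))
      = (\<Sum>b\<in>{b. b < r \<and> T (hd u) b = 1}. if [b] = drop k w then 1 else 0)"
    unfolding overlap_def by simp
  also have "\<dots> \<le> 1" by (rule sum_indicator_le_one[where c = "hd (drop k w)"]) (simp, metis list.sel(1))
  finally show ?thesis .
qed

lemma overlap_full:
  assumes u: "u \<in> adm_words r T k"
  shows "overlap k w k u = (if u = tl w then 1 else 0)"
proof -
  have "length u = k" using u by (simp add: adm_words_def admissible_def)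
  thus ?thesis unfolding overlap_def by (simp add: drop_Suc)
qed

lemma overlap_weights_le:
  fixes \<rho> lam :: real
  assumes "0 < \<rho>" "1 \<le> \<rho> * lam"
  shows "(\<Sum>L\<in>{1..k}. \<rho> ^ (k + 1 - L) * lam ^ (k - L)) \<le> real k * (\<rho> ^ k * lam ^ (k - 1))"
proof -
  have "\<rho> ^ (k + 1 - L) * lam ^ (k - L) \<le> \<rho> ^ k * lam ^ (k - 1)" if L: "L \<in> {1..k}" for L
  proof -
    have "0 < \<rho> * lam" using assms(2) by linarith
    then have "0 < lam" using assms(1) by (simp add: zero_less_mult_iff)
    moreover have "1 \<le> (\<rho> * lam) ^ (L - 1)" using assms(2) by (rule one_le_power)
    ultimately have "\<rho> ^ (k + 1 - L) * lam ^ (k - L) * 1 \<le> \<rho> ^ (k + 1 - L) * lam ^ (k - L) * (\<rho> * lam) ^ (L - 1)"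
      using assms(1) by (intro mult_left_mono) auto
    then have "\<rho> ^ (k + 1 - L) * lam ^ (k - L) \<le> \<rho> ^ (k + 1 - L) * lam ^ (k - L) * (\<rho> * lam) ^ (L - 1)"
      by simp
    also have "\<dots> = \<rho> ^ (k + 1 - L + (L - 1)) * lam ^ (k - L + (L - 1))"
      by (simp add: power_add power_mult_distrib)
    also have "\<dots> = \<rho> ^ k * lam ^ (k - 1)" using L by simp
    finally show ?thesis .
  qed
  then have "(\<Sum>L\<in>{1..k}. \<rho> ^ (k + 1 - L) * lam ^ (k - L)) \<le> of_nat (card {1..k}) * (\<rho> ^ k * lam ^ (k - 1))"
    by (rule sum_bounded_above)
  then show ?thesis by simp
qed

lemma sqrt_le_half_succ:
  fixes l :: real
  assumes "0 \<le> l"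
  shows "sqrt l \<le> (l + 1) / 2"
proof -
  have "0 \<le> (sqrt l - 1) ^ 2" by simp
  also have "(sqrt l - 1) ^ 2 = l - 2 * sqrt l + 1" using assms by (simp add: power2_eq_square algebra_simps)
  finally show ?thesis by simp
qed

lemma powr_neg_half_eq:
  fixes l :: real
  assumes "0 < l"
  shows "l powr (- real k / 2) = inverse (sqrt l) ^ k"
proof -
  have "l powr (real k / 2) = (l powr (1 / 2)) powr real k"
    by (simp add: powr_powr)
  also have "\<dots> = sqrt l ^ k" using assms by (simp add: powr_half_sqrt powr_realpow)
  finally have "l powr (real k / 2) = sqrt l ^ k" .
  moreover have "l powr (- real k / 2) = 1 / l powr (real k / 2)"
    using assms by (simp add: powr_minus_divide)
  ultimately show ?thesis by (simp add: inverse_eq_divide power_one_over)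
qed

section \<open>A test vector for the shift with forbidden words\<close>

locale perron_pair =
  fixes r :: nat and T :: "nat \<Rightarrow> nat \<Rightarrow> real" and x y :: "nat \<Rightarrow> real" and lam :: real
  assumes T01: "\<forall>a<r. \<forall>b<r. T a b = 0 \<or> T a b = 1"
    and x_pos: "\<forall>i<r. x i > 0" and x_eigen: "\<forall>i<r. (\<Sum>j<r. T i j * x j) = lam * x i"
    and y_pos: "\<forall>i<r. y i > 0" and y_eigen: "\<forall>i<r. (\<Sum>j<r. T j i * y j) = lam * y i"
begin

lemma sum_successors_x:
  assumes a: "a < r"
  shows "(\<Sum>b\<in>{b. b < r \<and> T a b = 1}. x b) = lam * x a"
proof -
  have "(\<Sum>j<r. T a j * x j) = (\<Sum>j<r. if T a j = 1 then x j else 0)"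
    using T01 a by (intro sum.cong) force+
  also have "\<dots> = (\<Sum>j\<in>{j\<in>{..<r}. T a j = 1}. x j)" by (rule sum.inter_filter[symmetric]) simp
  finally show ?thesis using x_eigen a by simp
qed

lemma sum_predecessors_y:
  assumes a: "a < r"
  shows "(\<Sum>c\<in>{c. c < r \<and> T c a = 1}. y c) = lam * y a"
proof -
  have "(\<Sum>j<r. T j a * y j) = (\<Sum>j<r. if T j a = 1 then y j else 0)"
    using T01 a by (intro sum.cong) force+
  also have "\<dots> = (\<Sum>j\<in>{j\<in>{..<r}. T j a = 1}. y j)" by (rule sum.inter_filter[symmetric]) simp
  finally show ?thesis using y_eigen a by simp
qed

lemma matvec_Tk_mat_hd_x:
  assumes k: "k \<ge> 2" and u: "u \<in> adm_words r T k"
  shows "matvec (adm_words r T k) (Tk_mat r T k) (\<lambda>v. x (hd v)) u = lam * x (hd u)"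
proof -
  have "hd u < r" using u k by (intro admissible_hd_less[of r T k]) (auto simp: adm_words_def)
  thus ?thesis unfolding matvec_Tk_mat[OF k u] using sum_successors_x by simp
qed

definition correction :: "nat \<Rightarrow> real \<Rightarrow> nat list \<Rightarrow> nat list \<Rightarrow> real" where
  "correction k \<rho> w u = (\<Sum>L\<in>{1..k}. x (hd w) * \<rho> ^ (k + 1 - L) * overlap k w L u)"

lemma correction_nonneg:
  assumes "\<rho> \<ge> 0" "admissible r T (k + 1) w"
  shows "correction k \<rho> w u \<ge> 0"
proof -
  have "x (hd w) > 0" using admissible_hd_less[OF assms(2)] x_pos by simp
  thus ?thesis unfolding correction_def overlap_def using assms(1) by (intro sum_nonneg) auto
qed

lemma correction_shift_eq:
  assumes k: "1 \<le> k" and \<mu>: "\<rho> * \<mu> = 1"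
  shows "(\<Sum>L\<in>{1..k}. x (hd w) * \<rho> ^ (k + 1 - L) * (if L = 1 then 1 else overlap k w (L - 1) u))
    = \<rho> ^ k * x (hd w) + \<mu> * correction k \<rho> w u - x (hd w) * overlap k w k u"
proof -
  obtain k' where k': "k = Suc k'" using k by (cases k) auto
  define c where "c L = x (hd w) * \<rho> ^ (k + 1 - L)" for L
  have "(\<Sum>L\<in>{1..k}. c L * (if L = 1 then 1 else overlap k w (L - 1) u))
      = c 1 + (\<Sum>L\<in>{Suc 1..Suc k'}. c L * overlap k w (L - 1) u)"
    using k' by (simp add: sum.atLeast_Suc_atMost)
  also have "(\<Sum>L\<in>{Suc 1..Suc k'}. c L * overlap k w (L - 1) u) = (\<Sum>L\<in>{1..k'}. c (Suc L) * overlap k w L u)"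
    by (simp only: sum.shift_bounds_cl_Suc_ivl diff_Suc_1)
  also have "\<mu> * correction k \<rho> w u = (\<Sum>L\<in>{1..k}. c (Suc L) * overlap k w L u)"
    unfolding correction_def sum_distrib_left
  proof (intro sum.cong refl)
    fix L assume "L \<in> {1..k}"
    then have "k + 1 - L = Suc (k + 1 - Suc L)" by auto
    then show "\<mu> * (x (hd w) * \<rho> ^ (k + 1 - L) * overlap k w L u) = c (Suc L) * overlap k w L u"
      using \<mu> by (simp add: c_def algebra_simps)
  qed
  moreover have "(\<Sum>L\<in>{1..k}. c (Suc L) * overlap k w L u)
      = (\<Sum>L\<in>{1..k'}. c (Suc L) * overlap k w L u) + x (hd w) * overlap k w k u"
    using k' by (simp add: c_def sum.cl_ivl_Suc)
  ultimately show ?thesis by (simp add: c_def)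
qed

text \<open>The weights \<open>\<rho>\<^sup>k\<^sup>+\<^sup>1\<^sup>-\<^sup>L\<close> are chosen so that shifting an overlap of length \<open>L\<close>
  to one of length \<open>L + 1\<close> costs exactly a factor \<open>\<mu> = 1 / \<rho>\<close>; the full overlap \<open>u = tl w\<close>
  produces the term that cancels the transition removed by \<open>E\<^sub>w\<close>.\<close>
lemma matvec_Tk_mat_correction_le:
  assumes k: "2 \<le> k" and u: "u \<in> adm_words r T k" and w: "admissible r T (k + 1) w"
    and \<rho>: "0 < \<rho>" and \<mu>: "\<rho> * \<mu> = 1"
  shows "matvec (adm_words r T k) (Tk_mat r T k) (correction k \<rho> w) u
    \<le> \<rho> ^ k * x (hd w) + \<mu> * correction k \<rho> w u - x (hd w) * (if u = tl w then 1 else 0)"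
proof -
  define B where "B = {b. b < r \<and> T (hd u) b = 1}"
  have xw: "0 < x (hd w)" using admissible_hd_less[OF w] x_pos by simp
  have "matvec (adm_words r T k) (Tk_mat r T k) (correction k \<rho> w) u
      = (\<Sum>L\<in>{1..k}. x (hd w) * \<rho> ^ (k + 1 - L) * (\<Sum>b\<in>B. overlap k w L (b # butlast u)))"
    unfolding matvec_Tk_mat[OF k u] correction_def B_def by (simp add: sum_distrib_left) (rule sum.swap)
  also have "\<dots> \<le> (\<Sum>L\<in>{1..k}. x (hd w) * \<rho> ^ (k + 1 - L) * (if L = 1 then 1 else overlap k w (L - 1) u))"
  proof (intro sum_mono mult_left_mono)
    fix L assume L: "L \<in> {1..k}"
    show "(\<Sum>b\<in>B. overlap k w L (b # butlast u)) \<le> (if L = 1 then 1 else overlap k w (L - 1) u)"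
    proof (cases "L = 1")
      case True
      then show ?thesis using overlap_one_Cons_le[OF k u w] by (simp add: B_def)
    next
      case False
      then obtain L' where "L = Suc L'" "1 \<le> L'" "L' < k" using L by (cases L) auto
      then show ?thesis using overlap_Cons_le[OF k u w] by (simp add: B_def)
    qed
  qed (use xw \<rho> in auto)
  also have "\<dots> = \<rho> ^ k * x (hd w) + \<mu> * correction k \<rho> w u - x (hd w) * overlap k w k u"
    using k \<mu> by (intro correction_shift_eq) auto
  finally show ?thesis using overlap_full[OF u, of w] by simp
qed

definition test_vector :: "nat \<Rightarrow> real \<Rightarrow> nat list set \<Rightarrow> nat list \<Rightarrow> real" where
  "test_vector k \<rho> C u = x (hd u) - (\<Sum>w\<in>C. correction k \<rho> w u)"

lemma matvec_E_mat_test_vector_le: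
  assumes k: "1 \<le> k" and C: "C \<subseteq> adm_words r T (k + 1)" and w: "w \<in> C" and \<rho>: "0 \<le> \<rho>"
  shows "matvec (adm_words r T k) (E_mat w) (test_vector k \<rho> C) u \<le> x (hd w) * (if u = tl w then 1 else 0)"
proof -
  have adm: "admissible r T (k + 1) w'" if "w' \<in> C" for w' using C that by (auto simp: adm_words_def)
  have "0 \<le> (\<Sum>w'\<in>C. correction k \<rho> w' (butlast w))"
    using correction_nonneg[OF \<rho> adm] by (intro sum_nonneg) auto
  then have "test_vector k \<rho> C (butlast w) \<le> x (hd w)"
    using butlast_adm_words(2)[OF adm[OF w] k] by (simp add: test_vector_def)
  then show ?thesis using matvec_E_mat[OF k adm[OF w]] by simp
qed

lemma matvec_Tk_mat_test_vector_ge: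
  assumes k: "2 \<le> k" and C: "C \<subseteq> adm_words r T (k + 1)" and u: "u \<in> adm_words r T k"
    and \<rho>: "0 < \<rho>" and \<mu>: "\<rho> * \<mu> = 1"
  shows "lam * x (hd u)
      - (\<Sum>w\<in>C. \<rho> ^ k * x (hd w) + \<mu> * correction k \<rho> w u - x (hd w) * (if u = tl w then 1 else 0))
    \<le> matvec (adm_words r T k) (Tk_mat r T k) (test_vector k \<rho> C) u"
proof -
  have "(\<Sum>w\<in>C. matvec (adm_words r T k) (Tk_mat r T k) (correction k \<rho> w) u)
      \<le> (\<Sum>w\<in>C. \<rho> ^ k * x (hd w) + \<mu> * correction k \<rho> w u - x (hd w) * (if u = tl w then 1 else 0))"
    using C by (intro sum_mono matvec_Tk_mat_correction_le[OF k u _ \<rho> \<mu>]) (auto simp: adm_words_def)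
  moreover have "test_vector k \<rho> C = (\<lambda>v. x (hd v) - 1 * (\<Sum>w\<in>C. correction k \<rho> w v))"
    by (simp add: test_vector_def fun_eq_iff)
  then have "matvec (adm_words r T k) (Tk_mat r T k) (test_vector k \<rho> C) u
      = lam * x (hd u) - (\<Sum>w\<in>C. matvec (adm_words r T k) (Tk_mat r T k) (correction k \<rho> w) u)"
    by (simp only: matvec_diff matvec_sum matvec_Tk_mat_hd_x[OF k u])
  ultimately show ?thesis by linarith
qed

lemma matvec_Tk_forbid_test_vector_ge:
  assumes k: "2 \<le> k" and C: "finite C" "C \<subseteq> adm_words r T (k + 1)" and u: "u \<in> adm_words r T k"
    and \<rho>: "0 < \<rho>" and \<mu>: "\<rho> * \<mu> = 1"
  shows "\<mu> * test_vector k \<rho> C u + (lam - \<mu>) * x (hd u) - \<rho> ^ k * (\<Sum>w\<in>C. x (hd w))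
    \<le> matvec (adm_words r T k) (Tk_forbid r T k C) (test_vector k \<rho> C) u"
proof -
  have "(\<Sum>w\<in>C. matvec (adm_words r T k) (E_mat w) (test_vector k \<rho> C) u)
      \<le> (\<Sum>w\<in>C. x (hd w) * (if u = tl w then 1 else 0))"
    using k \<rho> by (intro sum_mono matvec_E_mat_test_vector_le[OF _ C(2)]) auto
  moreover have "(\<Sum>w\<in>C. \<rho> ^ k * x (hd w) + \<mu> * correction k \<rho> w u - x (hd w) * (if u = tl w then 1 else 0))
      = \<rho> ^ k * (\<Sum>w\<in>C. x (hd w)) + \<mu> * (\<Sum>w\<in>C. correction k \<rho> w u)
        - (\<Sum>w\<in>C. x (hd w) * (if u = tl w then 1 else 0))"
    by (simp add: sum.distrib sum_subtractf sum_distrib_left)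
  moreover have "\<mu> * test_vector k \<rho> C u = \<mu> * x (hd u) - \<mu> * (\<Sum>w\<in>C. correction k \<rho> w u)"
    by (simp add: test_vector_def right_diff_distrib)
  moreover have "(lam - \<mu>) * x (hd u) = lam * x (hd u) - \<mu> * x (hd u)"
    by (simp add: left_diff_distrib)
  ultimately show ?thesis
    using matvec_Tk_mat_test_vector_ge[OF k C(2) u \<rho> \<mu>]
      matvec_Tk_forbid_eq[of "adm_words r T k" r T k C "test_vector k \<rho> C" u]
    by linarith
qed

lemma sum_extensions_y_last:
  assumes L: "1 \<le> L" and s: "admissible r T L s"
  shows "(\<Sum>u\<in>{u \<in> adm_words r T (L + m). take L u = s}. y (last u)) = lam ^ m * y (last s)"
proof (induction m)
  case 0
  have "{u \<in> adm_words r T (L + 0). take L u = s} = {s}"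
    using s by (auto simp: adm_words_def admissible_def)
  then show ?case by simp
next
  case (Suc m)
  define A where "A = {u \<in> adm_words r T (L + m). take L u = s}"
  have "(\<Sum>u\<in>{u \<in> adm_words r T (L + Suc m). take L u = s}. y (last u))
      = (\<Sum>(u, c)\<in>(SIGMA u:A. {c. c < r \<and> T c (last u) = 1}). y c)"
    unfolding adm_extensions_Suc[OF L] A_def
    by (subst sum.reindex) (auto simp: inj_on_def case_prod_beta)
  also have "\<dots> = (\<Sum>u\<in>A. \<Sum>c\<in>{c. c < r \<and> T c (last u) = 1}. y c)"
    using finite_adm_words by (subst sum.Sigma) (auto simp: A_def)
  also have "\<dots> = (\<Sum>u\<in>A. lam * y (last u))"
  proof (intro sum.cong refl sum_predecessors_y)
    fix u assume "u \<in> A"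
    then show "last u < r" using admissible_last_less[of r T "L + m" u] L by (simp add: A_def adm_words_def)
  qed
  also have "\<dots> = lam ^ Suc m * y (last s)" using Suc.IH by (simp add: A_def flip: sum_distrib_left)
  finally show ?case .
qed

lemma sum_adm_words_y_last_x_hd:
  assumes k: "k \<ge> 1"
  shows "(\<Sum>u\<in>adm_words r T k. y (last u) * x (hd u)) = lam ^ (k - 1) * (\<Sum>a<r. x a * y a)"
proof -
  have hdS: "hd ` adm_words r T k \<subseteq> {..<r}" using admissible_hd_less k by (auto simp: adm_words_def)
  have "(\<Sum>u\<in>adm_words r T k. y (last u) * x (hd u))
      = (\<Sum>a\<in>{..<r}. \<Sum>u\<in>{u \<in> adm_words r T k. hd u = a}. y (last u) * x (hd u))"
    by (rule sum.group[symmetric, OF finite_adm_words _ hdS]) simp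
  also have "\<dots> = (\<Sum>a\<in>{..<r}. x a * (lam ^ (k - 1) * y a))"
  proof (intro sum.cong refl)
    fix a assume a: "a \<in> {..<r}"
    have t1: "take 1 u = [hd u]" if "u \<in> adm_words r T k" for u
    proof -
      have "length u = k" using that by (simp add: adm_words_def admissible_def)
      thus ?thesis using k by (cases u) auto
    qed
    have kk: "1 + (k - 1) = k" using k by simp
    have set: "{u \<in> adm_words r T k. hd u = a} = {u \<in> adm_words r T (1 + (k - 1)). take 1 u = [a]}"
      unfolding kk using t1 by auto
    have sa: "admissible r T 1 [a]" using a by (simp add: admissible_def)
    have "(\<Sum>u\<in>{u \<in> adm_words r T k. hd u = a}. y (last u) * x (hd u))
        = x a * (\<Sum>u\<in>{u \<in> adm_words r T k. hd u = a}. y (last u))"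
      by (simp add: sum_distrib_left mult.commute)
    also have "\<dots> = x a * (lam ^ (k - 1) * y a)" unfolding set using sum_extensions_y_last[OF _ sa, of "k - 1"] by simp
    finally show "(\<Sum>u\<in>{u \<in> adm_words r T k. hd u = a}. y (last u) * x (hd u)) = x a * (lam ^ (k - 1) * y a)" .
  qed
  finally show ?thesis by (simp add: sum_distrib_left algebra_simps)
qed

lemma sum_overlap_y_last:
  assumes k: "k \<ge> 1" and w: "admissible r T (k + 1) w" and L: "1 \<le> L" "L \<le> k"
  shows "(\<Sum>u\<in>adm_words r T k. y (last u) * overlap k w L u) = lam ^ (k - L) * y (last w)"
proof -
  define s where "s = drop (k + 1 - L) w"
  have lw: "length w = k + 1" using w by (simp add: admissible_def)
  have sa: "admissible r T L s" using admissible_drop[OF w, of "k + 1 - L"] L unfolding s_def by simp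
  have ls: "last s = last w" unfolding s_def using L lw by (simp add: last_drop)
  have kk: "L + (k - L) = k" using L by simp
  have "(\<Sum>u\<in>adm_words r T k. y (last u) * overlap k w L u) = (\<Sum>u\<in>adm_words r T k. if take L u = s then y (last u) else 0)"
    unfolding overlap_def s_def by (intro sum.cong) auto
  also have "\<dots> = (\<Sum>u\<in>{u\<in>adm_words r T k. take L u = s}. y (last u))"
    by (rule sum.inter_filter[symmetric]) (rule finite_adm_words)
  also have "\<dots> = lam ^ (k - L) * y (last s)" using sum_extensions_y_last[OF L(1) sa, of "k - L"] unfolding kk .
  finally show ?thesis using ls by simp
qed

lemma sum_correction_y_last:
  assumes k: "k \<ge> 1" and w: "admissible r T (k + 1) w"
  shows "(\<Sum>u\<in>adm_words r T k. y (last u) * correction k \<rho> w u)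
     = x (hd w) * y (last w) * (\<Sum>L\<in>{1..k}. \<rho> ^ (k + 1 - L) * lam ^ (k - L))"
proof -
  have "(\<Sum>u\<in>adm_words r T k. y (last u) * correction k \<rho> w u)
      = (\<Sum>L\<in>{1..k}. x (hd w) * \<rho> ^ (k + 1 - L) * (\<Sum>u\<in>adm_words r T k. y (last u) * overlap k w L u))"
    unfolding correction_def by (simp add: sum_distrib_left sum.swap[of _ "adm_words r T k"] algebra_simps)
  also have "\<dots> = (\<Sum>L\<in>{1..k}. x (hd w) * \<rho> ^ (k + 1 - L) * (lam ^ (k - L) * y (last w)))"
    by (intro sum.cong refl) (simp add: sum_overlap_y_last[OF k w])
  finally show ?thesis by (simp add: sum_distrib_left algebra_simps)
qed

lemma test_vector_pos_somewhere:
  assumes k: "k \<ge> 1" and C: "finite C" "C \<subseteq> adm_words r T (k + 1)"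
    and gt: "lam ^ (k - 1) * (\<Sum>a<r. x a * y a)
       > (\<Sum>w\<in>C. x (hd w) * y (last w) * (\<Sum>L\<in>{1..k}. \<rho> ^ (k + 1 - L) * lam ^ (k - L)))"
  shows "\<exists>u\<in>adm_words r T k. 0 < test_vector k \<rho> C u"
proof (rule ccontr)
  assume "\<not> ?thesis"
  hence np: "\<forall>u\<in>adm_words r T k. x (hd u) - (\<Sum>w\<in>C. correction k \<rho> w u) \<le> 0"
    by (force simp: test_vector_def)
  have Ca: "admissible r T (k + 1) w" if "w \<in> C" for w using C that by (auto simp: adm_words_def)
  have "(\<Sum>u\<in>adm_words r T k. y (last u) * (x (hd u) - (\<Sum>w\<in>C. correction k \<rho> w u)))
     = (\<Sum>u\<in>adm_words r T k. y (last u) * x (hd u)) - (\<Sum>w\<in>C. \<Sum>u\<in>adm_words r T k. y (last u) * correction k \<rho> w u)"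
    by (simp add: right_diff_distrib sum_subtractf sum_distrib_left sum.swap[of _ C])
  also have "\<dots> = lam ^ (k - 1) * (\<Sum>a<r. x a * y a)
      - (\<Sum>w\<in>C. x (hd w) * y (last w) * (\<Sum>L\<in>{1..k}. \<rho> ^ (k + 1 - L) * lam ^ (k - L)))"
    using sum_adm_words_y_last_x_hd[OF k] sum_correction_y_last[OF k Ca] by simp
  finally have "(\<Sum>u\<in>adm_words r T k. y (last u) * (x (hd u) - (\<Sum>w\<in>C. correction k \<rho> w u))) > 0"
    using gt by simp
  moreover have "(\<Sum>u\<in>adm_words r T k. y (last u) * (x (hd u) - (\<Sum>w\<in>C. correction k \<rho> w u))) \<le> 0"
  proof (rule sum_nonpos)
    fix u assume u: "u \<in> adm_words r T k"
    have "y (last u) > 0" using admissible_last_less[of r T k u] u k y_pos by (simp add: adm_words_def)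
    thus "y (last u) * (x (hd u) - (\<Sum>w\<in>C. correction k \<rho> w u)) \<le> 0" using np u
      by (simp add: mult_nonneg_nonpos)
  qed
  ultimately show False by simp
qed

lemma spec_radius_Tk_forbid_le:
  assumes k: "2 \<le> k" and C: "finite C" "C \<subseteq> adm_words r T (k + 1)"
    and ne: "adm_words r T k \<noteq> {}"
  shows "spec_radius (adm_words r T k) (Tk_forbid r T k C) \<le> lam"
proof (rule spec_radius_le_dominating[OF finite_adm_words ne])
  show "\<forall>u\<in>adm_words r T k. 0 < x (hd u)"
    using x_pos admissible_hd_less[of r T k] k by (simp add: adm_words_def)
  show "\<forall>u\<in>adm_words r T k. matvec (adm_words r T k) (Tk_mat r T k) (\<lambda>v. x (hd v)) u = lam * x (hd u)"
    using matvec_Tk_mat_hd_x[OF k] by blast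
  show "\<forall>u\<in>adm_words r T k. \<forall>v\<in>adm_words r T k.
      0 \<le> Tk_forbid r T k C u v \<and> Tk_forbid r T k C u v \<le> Tk_mat r T k u v"
    using Tk_forbid_bounds[OF _ C, of u v for u v] k by simp
qed

lemma spec_radius_Tk_forbid_ge:
  assumes k: "2 \<le> k" and C: "finite C" "C \<subseteq> adm_words r T (k + 1)" and \<mu>: "0 < \<mu>"
    and pos: "(\<Sum>w\<in>C. x (hd w) * y (last w) * (\<Sum>L\<in>{1..k}. (1 / \<mu>) ^ (k + 1 - L) * lam ^ (k - L)))
      < lam ^ (k - 1) * (\<Sum>a<r. x a * y a)"
    and small: "\<forall>a<r. (1 / \<mu>) ^ k * (\<Sum>w\<in>C. x (hd w)) \<le> (lam - \<mu>) * x a"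
  shows "\<mu> \<le> spec_radius (adm_words r T k) (Tk_forbid r T k C)"
    and "adm_words r T k \<noteq> {}"
proof -
  obtain s where s: "s \<in> adm_words r T k" "0 < test_vector k (1 / \<mu>) C s"
    using test_vector_pos_somewhere[OF _ C pos] k by auto
  then show "adm_words r T k \<noteq> {}" by blast
  show "\<mu> \<le> spec_radius (adm_words r T k) (Tk_forbid r T k C)"
  proof (rule spec_radius_ge_subinvariant[where z = "test_vector k (1 / \<mu>) C", OF finite_adm_words _ s])
    show "\<forall>u\<in>adm_words r T k. \<forall>v\<in>adm_words r T k. 0 \<le> Tk_forbid r T k C u v"
      using Tk_forbid_bounds[OF _ C, of u v for u v] k by simp
    show "\<forall>u\<in>adm_words r T k. 0 < test_vector k (1 / \<mu>) C u \<longrightarrow>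
        \<mu> * test_vector k (1 / \<mu>) C u \<le> matvec (adm_words r T k) (Tk_forbid r T k C) (test_vector k (1 / \<mu>) C) u"
    proof (intro ballI impI)
      fix u assume u: "u \<in> adm_words r T k"
      have "hd u < r" using u k admissible_hd_less[of r T k u] by (simp add: adm_words_def)
      then have "(1 / \<mu>) ^ k * (\<Sum>w\<in>C. x (hd w)) \<le> (lam - \<mu>) * x (hd u)" using small by blast
      then show "\<mu> * test_vector k (1 / \<mu>) C u
          \<le> matvec (adm_words r T k) (Tk_forbid r T k C) (test_vector k (1 / \<mu>) C) u"
        using matvec_Tk_forbid_test_vector_ge[OF k C u, of "1 / \<mu>" \<mu>] \<mu> by simp
    qed
  qed
qed

lemma overlap_sum_lt:
  assumes r: "0 < r" and k: "1 \<le> k" and C: "C \<subseteq> adm_words r T (k + 1)" "card C \<le> 2"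
    and \<rho>: "0 < \<rho>" "1 \<le> \<rho> * lam"
    and small: "\<forall>a<r. \<forall>b<r. 2 * (x a * y b) * (real k * \<rho> ^ k) < (\<Sum>i<r. x i * y i)"
  shows "(\<Sum>w\<in>C. x (hd w) * y (last w) * (\<Sum>L\<in>{1..k}. \<rho> ^ (k + 1 - L) * lam ^ (k - L)))
      < lam ^ (k - 1) * (\<Sum>i<r. x i * y i)"
proof -
  define B where "B = lam ^ (k - 1) * (\<Sum>i<r. x i * y i) / 2"
  have "0 < \<rho> * lam" using \<rho>(2) by linarith
  then have lam0: "0 < lam" using \<rho>(1) by (simp add: zero_less_mult_iff)
  have sxy: "0 < (\<Sum>i<r. x i * y i)" using r x_pos y_pos by (intro sum_pos) auto
  have summand_lt: "x (hd w) * y (last w) * (\<Sum>L\<in>{1..k}. \<rho> ^ (k + 1 - L) * lam ^ (k - L)) < B"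
    if w: "w \<in> C" for w
  proof -
    have "admissible r T (k + 1) w" using C(1) w by (auto simp: adm_words_def)
    then have hw: "hd w < r" "last w < r"
      using admissible_hd_less admissible_last_less by auto
    then have xy: "0 < x (hd w) * y (last w)" using x_pos y_pos by simp
    have "x (hd w) * y (last w) * (\<Sum>L\<in>{1..k}. \<rho> ^ (k + 1 - L) * lam ^ (k - L))
        \<le> x (hd w) * y (last w) * (real k * (\<rho> ^ k * lam ^ (k - 1)))"
      using overlap_weights_le[OF \<rho>] xy by (intro mult_left_mono) auto
    also have "\<dots> = 2 * (x (hd w) * y (last w)) * (real k * \<rho> ^ k) * lam ^ (k - 1) / 2"
      by simp
    also have "\<dots> < B"
    proof -
      have "2 * (x (hd w) * y (last w)) * (real k * \<rho> ^ k) < (\<Sum>i<r. x i * y i)"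
        using small hw by blast
      then have "2 * (x (hd w) * y (last w)) * (real k * \<rho> ^ k) * lam ^ (k - 1)
          < (\<Sum>i<r. x i * y i) * lam ^ (k - 1)"
        using lam0 by (intro mult_strict_right_mono) auto
      then show ?thesis unfolding B_def by (simp add: mult.commute)
    qed
    finally show ?thesis .
  qed
  show ?thesis
  proof (cases "C = {}")
    case True
    then show ?thesis using sxy lam0 by simp
  next
    case False
    have "finite C" using C(1) finite_adm_words finite_subset by blast
    then have "(\<Sum>w\<in>C. x (hd w) * y (last w) * (\<Sum>L\<in>{1..k}. \<rho> ^ (k + 1 - L) * lam ^ (k - L)))
        < real (card C) * B"
      using False summand_lt by (intro sum_bounded_above_strict) (auto simp: card_gt_0_iff)
    also have "\<dots> \<le> 2 * B" using C(2) sxy lam0 by (intro mult_right_mono) (auto simp: B_def)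
    finally show ?thesis by (simp add: B_def)
  qed
qed

lemma forbidden_heads_sum_le:
  assumes k: "1 \<le> k" and C: "C \<subseteq> adm_words r T (k + 1)" "card C \<le> 2" and \<rho>: "0 \<le> \<rho>"
    and spread: "\<forall>a<r. \<forall>b<r. 2 * (\<rho> ^ k * x b) \<le> \<delta> * x a"
    and a: "a < r"
  shows "\<rho> ^ k * (\<Sum>w\<in>C. x (hd w)) \<le> \<delta> * x a"
proof -
  have "\<rho> ^ k * x (hd w) \<le> \<delta> * x a / 2" if w: "w \<in> C" for w
  proof -
    have "admissible r T (k + 1) w" using C(1) w by (auto simp: adm_words_def)
    then have "hd w < r" using admissible_hd_less by auto
    then have "2 * (\<rho> ^ k * x (hd w)) \<le> \<delta> * x a" using spread a by blast
    then show ?thesis by linarith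
  qed
  then have "(\<Sum>w\<in>C. \<rho> ^ k * x (hd w)) \<le> real (card C) * (\<delta> * x a / 2)"
    by (rule sum_bounded_above)
  also have "\<dots> \<le> 2 * (\<delta> * x a / 2)"
  proof (rule mult_right_mono)
    have "0 \<le> 2 * (\<rho> ^ k * x a)" using x_pos a \<rho> by (simp add: less_imp_le)
    moreover have "2 * (\<rho> ^ k * x a) \<le> \<delta> * x a" using spread a by blast
    ultimately show "0 \<le> \<delta> * x a / 2" by linarith
  qed (use C(2) in simp)
  finally show ?thesis by (simp add: sum_distrib_left)
qed

lemma spec_radius_Tk_forbid_close:
  assumes r: "0 < r" and lam: "1 < lam" and k: "2 \<le> k"
    and C: "C \<subseteq> adm_words r T (k + 1)" "card C \<le> 2"
    and \<delta>: "0 < \<delta>" "\<delta> \<le> (lam - 1) / 2"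
    and spread: "\<forall>a<r. \<forall>b<r. 2 * (inverse (sqrt lam) ^ k * x b) \<le> \<delta> * x a"
    and small: "\<forall>a<r. \<forall>b<r. 2 * (x a * y b) * (real k * inverse ((lam + 1) / 2) ^ k)
      < (\<Sum>i<r. x i * y i)"
  shows "\<bar>spec_radius (adm_words r T k) (Tk_forbid r T k C) - lam\<bar> \<le> \<delta>"
proof -
  define \<mu> where "\<mu> = lam - \<delta>"
  have finC: "finite C" using C(1) finite_adm_words finite_subset by blast
  have \<mu>_ge: "(lam + 1) / 2 \<le> \<mu>" and \<mu>_le: "\<mu> \<le> lam" using \<delta> by (auto simp: \<mu>_def)
  then have \<mu>: "0 < \<mu>" "1 \<le> 1 / \<mu> * lam" using lam by auto
  have "inverse \<mu> \<le> inverse ((lam + 1) / 2)"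
    by (rule le_imp_inverse_le[OF \<mu>_ge]) (use lam in simp)
  then have "1 / \<mu> \<le> inverse ((lam + 1) / 2)" by (simp add: inverse_eq_divide)
  then have \<rho>_small: "(1 / \<mu>) ^ k \<le> inverse ((lam + 1) / 2) ^ k"
    using \<mu> by (intro power_mono) auto
  have "sqrt lam \<le> \<mu>" using sqrt_le_half_succ[of lam] lam \<mu>_ge by linarith
  then have "inverse \<mu> \<le> inverse (sqrt lam)"
    by (rule le_imp_inverse_le) (use lam in simp)
  then have "1 / \<mu> \<le> inverse (sqrt lam)" by (simp add: inverse_eq_divide)
  then have \<rho>_spread: "(1 / \<mu>) ^ k \<le> inverse (sqrt lam) ^ k"
    using \<mu> by (intro power_mono) auto
  have pos: "(\<Sum>w\<in>C. x (hd w) * y (last w) * (\<Sum>L\<in>{1..k}. (1 / \<mu>) ^ (k + 1 - L) * lam ^ (k - L)))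
      < lam ^ (k - 1) * (\<Sum>a<r. x a * y a)"
  proof (rule overlap_sum_lt[OF r _ C _ \<mu>(2)])
    show "\<forall>a<r. \<forall>b<r. 2 * (x a * y b) * (real k * (1 / \<mu>) ^ k) < (\<Sum>i<r. x i * y i)"
      using small x_pos y_pos \<rho>_small
      by (smt (verit, best) mult_left_mono mult_nonneg_nonneg of_nat_0_le_iff)
  qed (use k \<mu> in auto)
  have heads: "\<forall>a<r. (1 / \<mu>) ^ k * (\<Sum>w\<in>C. x (hd w)) \<le> (lam - \<mu>) * x a"
  proof (intro allI impI)
    fix a assume "a < r"
    have "\<forall>a<r. \<forall>b<r. 2 * ((1 / \<mu>) ^ k * x b) \<le> \<delta> * x a"
      using spread x_pos \<rho>_spread by (smt (verit, best) mult_right_mono)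
    then show "(1 / \<mu>) ^ k * (\<Sum>w\<in>C. x (hd w)) \<le> (lam - \<mu>) * x a"
      using forbidden_heads_sum_le[OF _ C _ _ \<open>a < r\<close>] k \<mu> by (simp add: \<mu>_def)
  qed
  have "\<mu> \<le> spec_radius (adm_words r T k) (Tk_forbid r T k C)"
    by (rule spec_radius_Tk_forbid_ge(1)[OF k finC C(1) \<mu>(1) pos heads])
  moreover have ne: "adm_words r T k \<noteq> {}"
    by (rule spec_radius_Tk_forbid_ge(2)[OF k finC C(1) \<mu>(1) pos heads])
  moreover have "spec_radius (adm_words r T k) (Tk_forbid r T k C) \<le> lam"
    by (rule spec_radius_Tk_forbid_le[OF k finC C(1) ne])
  ultimately show ?thesis by (simp add: \<mu>_def)
qed

lemma perron_pair_bounds: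
  assumes r: "0 < r"
  obtains xmin xmax ymax where "0 < xmin" "\<forall>a<r. xmin \<le> x a \<and> x a \<le> xmax \<and> y a \<le> ymax"
proof (rule that)
  have "Min (x ` {..<r}) \<in> x ` {..<r}" using r by (intro Min_in) auto
  then show "0 < Min (x ` {..<r})" using x_pos by auto
  show "\<forall>a<r. Min (x ` {..<r}) \<le> x a \<and> x a \<le> Max (x ` {..<r}) \<and> y a \<le> Max (y ` {..<r})"
    by simp
qed

lemma eventually_close_hypotheses:
  assumes r: "0 < r" and lam: "1 < lam"
  obtains c where "0 < c"
    "\<forall>\<^sub>F k in sequentially. 2 \<le> k \<and> c * inverse (sqrt lam) ^ k \<le> (lam - 1) / 2
      \<and> (\<forall>a<r. \<forall>b<r. 2 * (inverse (sqrt lam) ^ k * x b) \<le> c * inverse (sqrt lam) ^ k * x a)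
      \<and> (\<forall>a<r. \<forall>b<r. 2 * (x a * y b) * (real k * inverse ((lam + 1) / 2) ^ k) < (\<Sum>i<r. x i * y i))"
proof -
  obtain xmin xmax ymax where xmin: "0 < xmin"
    and "\<forall>a<r. xmin \<le> x a \<and> x a \<le> xmax \<and> y a \<le> ymax"
    using perron_pair_bounds[OF r] .
  then have bounds: "xmin \<le> x a" "x a \<le> xmax" "y a \<le> ymax" if "a < r" for a
    using that by auto
  define c where "c = 2 * xmax / xmin"
  have c: "0 < c" using xmin bounds[OF r] x_pos r by (simp add: c_def)
  have spread: "2 * (inverse (sqrt lam) ^ k * x b) \<le> c * inverse (sqrt lam) ^ k * x a"
    if "a < r" "b < r" for a b k
  proof -
    have "2 * x b \<le> c * xmin" using bounds[OF that(2)] xmin by (simp add: c_def)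
    also have "\<dots> \<le> c * x a" using bounds[OF that(1)] c by simp
    finally have "inverse (sqrt lam) ^ k * (2 * x b) \<le> inverse (sqrt lam) ^ k * (c * x a)"
      using lam by (intro mult_left_mono) auto
    then show ?thesis by (simp add: ac_simps)
  qed
  have small: "2 * (x a * y b) * (real k * inverse ((lam + 1) / 2) ^ k)
      \<le> 2 * (xmax * ymax) * (real k * inverse ((lam + 1) / 2) ^ k)" if "a < r" "b < r" for a b k
  proof -
    have "x a * y b \<le> xmax * ymax"
      using bounds[OF that(1)] bounds[OF that(2)] x_pos y_pos that by (intro mult_mono) auto
    then show ?thesis using lam by (intro mult_right_mono) auto
  qed
  have "1 < sqrt lam" using lam by simp
  then have "norm (inverse (sqrt lam)) < 1" using inverse_less_1_iff by force
  then have "(\<lambda>k. c * inverse (sqrt lam) ^ k) \<longlonglongrightarrow> 0"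
    by (intro tendsto_mult_right_zero LIMSEQ_power_zero)
  then have E1: "\<forall>\<^sub>F k in sequentially. c * inverse (sqrt lam) ^ k < (lam - 1) / 2"
    using lam by (intro order_tendstoD(2)) auto
  have "1 < (lam + 1) / 2" using lam by simp
  then have "norm (inverse ((lam + 1) / 2)) < 1" using inverse_less_1_iff by force
  then have "(\<lambda>k. 2 * (xmax * ymax) * (real k * inverse ((lam + 1) / 2) ^ k)) \<longlonglongrightarrow> 0"
    by (intro tendsto_mult_right_zero powser_times_n_limit_0)
  moreover have "0 < (\<Sum>i<r. x i * y i)" using r x_pos y_pos by (intro sum_pos) auto
  ultimately have E2: "\<forall>\<^sub>F k in sequentially.
      2 * (xmax * ymax) * (real k * inverse ((lam + 1) / 2) ^ k) < (\<Sum>i<r. x i * y i)"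
    by (intro order_tendstoD(2))
  show ?thesis
  proof (rule that[OF c])
    show "\<forall>\<^sub>F k in sequentially. 2 \<le> k \<and> c * inverse (sqrt lam) ^ k \<le> (lam - 1) / 2
      \<and> (\<forall>a<r. \<forall>b<r. 2 * (inverse (sqrt lam) ^ k * x b) \<le> c * inverse (sqrt lam) ^ k * x a)
      \<and> (\<forall>a<r. \<forall>b<r. 2 * (x a * y b) * (real k * inverse ((lam + 1) / 2) ^ k) < (\<Sum>i<r. x i * y i))"
      using eventually_ge_at_top[of 2] E1 E2
    proof eventually_elim
      case (elim k)
      then show ?case using spread small by (blast intro: less_imp_le le_less_trans)
    qed
  qed
qed

lemma eventually_spec_radius_Tk_forbid_close:
  assumes r: "0 < r" and lam: "1 < lam"
  obtains c where "0 < c"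
    "\<forall>\<^sub>F k in sequentially. \<forall>C. C \<subseteq> adm_words r T (k + 1) \<and> card C \<le> 2 \<longrightarrow>
       \<bar>spec_radius (adm_words r T k) (Tk_forbid r T k C) - lam\<bar> \<le> c * lam powr (- real k / 2)"
proof -
  obtain c where c: "0 < c" and ev: "\<forall>\<^sub>F k in sequentially. 2 \<le> k \<and> c * inverse (sqrt lam) ^ k \<le> (lam - 1) / 2
      \<and> (\<forall>a<r. \<forall>b<r. 2 * (inverse (sqrt lam) ^ k * x b) \<le> c * inverse (sqrt lam) ^ k * x a)
      \<and> (\<forall>a<r. \<forall>b<r. 2 * (x a * y b) * (real k * inverse ((lam + 1) / 2) ^ k) < (\<Sum>i<r. x i * y i))"
    using eventually_close_hypotheses[OF r lam] .
  show ?thesis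
  proof (rule that[OF c])
    show "\<forall>\<^sub>F k in sequentially. \<forall>C. C \<subseteq> adm_words r T (k + 1) \<and> card C \<le> 2 \<longrightarrow>
       \<bar>spec_radius (adm_words r T k) (Tk_forbid r T k C) - lam\<bar> \<le> c * lam powr (- real k / 2)"
      using ev
    proof eventually_elim
      case (elim k)
      have "0 < c * inverse (sqrt lam) ^ k" using c lam by simp
      then have "\<forall>C. C \<subseteq> adm_words r T (k + 1) \<and> card C \<le> 2 \<longrightarrow>
          \<bar>spec_radius (adm_words r T k) (Tk_forbid r T k C) - lam\<bar> \<le> c * inverse (sqrt lam) ^ k"
        using elim by (blast intro: spec_radius_Tk_forbid_close[OF r lam])
      moreover have "lam powr (- real k / 2) = inverse (sqrt lam) ^ k"
        using lam by (intro powr_neg_half_eq) simp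
      ultimately show ?case by simp
    qed
  qed
qed

end

lemma perron_pair_exists:
  assumes r: "0 < r" and T01: "\<forall>x<r. \<forall>y<r. T x y = 0 \<or> T x y = 1" and irr: "irreducible01 r T"
  obtains x y where "perron_pair r T x y (spec_radius {..<r} T)"
proof -
  have S: "finite {..<r}" "{..<r} \<noteq> {}" using r by auto
  have M: "\<forall>u\<in>{..<r}. \<forall>v\<in>{..<r}. 0 \<le> T u v" and Mt: "\<forall>u\<in>{..<r}. \<forall>v\<in>{..<r}. 0 \<le> T v u"
    using T01 by force+
  have irr': "irreducible_on {..<r} T" using irreducible_on_of_irreducible01[OF T01 irr] .
  obtain x where x: "\<forall>u\<in>{..<r}. 0 < x u"
    "\<forall>u\<in>{..<r}. matvec {..<r} T x u = spec_radius {..<r} T * x u"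
    using perron_eigenvector[OF S irr' M] .
  obtain y where y: "\<forall>u\<in>{..<r}. 0 < y u"
    "\<forall>u\<in>{..<r}. matvec {..<r} (\<lambda>a b. T b a) y u = spec_radius {..<r} (\<lambda>a b. T b a) * y u"
    using perron_eigenvector[OF S irreducible_on_transpose[OF irr'] Mt] .
  have "spec_radius {..<r} T = spec_radius {..<r} (\<lambda>a b. T b a)"
    by (rule eigenvalue_eq_of_left_right_eigenvectors[OF S x y])
  with x y have "perron_pair r T x y (spec_radius {..<r} T)"
    using T01 by unfold_locales (auto simp: matvec_def)
  then show ?thesis by (rule that)
qed

theorem theorem1p6:
  fixes r :: nat and T :: "nat \<Rightarrow> nat \<Rightarrow> real"
  assumes r_pos: "0 < r"
    and T01: "\<forall>x<r. \<forall>y<r. T x y = 0 \<or> T x y = 1"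
    and irr: "irreducible01 r T"
    and gt1: "pf_eigenvalue {..<r} T > 1"
  shows "\<exists>C>0. \<exists>K::nat. \<forall>k\<ge>K. \<forall>w1 w2.
           admissible r T (k + 1) w1 \<longrightarrow> admissible r T (k + 1) w2 \<longrightarrow>
           \<bar>pf_eigenvalue (adm_words r T k) (Tk_forbid r T k {w1, w2})
              - pf_eigenvalue {..<r} T\<bar>
             \<le> C * pf_eigenvalue {..<r} T powr (- real k / 2)"
proof -
  obtain x y where "perron_pair r T x y (pf_eigenvalue {..<r} T)"
    using perron_pair_exists[OF r_pos T01 irr] .
  then interpret perron_pair r T x y "pf_eigenvalue {..<r} T" .
  obtain c where c: "0 < c" and "\<forall>\<^sub>F k in sequentially. \<forall>C. C \<subseteq> adm_words r T (k + 1) \<and> card C \<le> 2 \<longrightarrow>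
      \<bar>pf_eigenvalue (adm_words r T k) (Tk_forbid r T k C) - pf_eigenvalue {..<r} T\<bar>
        \<le> c * pf_eigenvalue {..<r} T powr (- real k / 2)"
    using eventually_spec_radius_Tk_forbid_close[OF r_pos gt1] .
  then obtain K where K: "\<forall>k\<ge>K. \<forall>C. C \<subseteq> adm_words r T (k + 1) \<and> card C \<le> 2 \<longrightarrow>
      \<bar>pf_eigenvalue (adm_words r T k) (Tk_forbid r T k C) - pf_eigenvalue {..<r} T\<bar>
        \<le> c * pf_eigenvalue {..<r} T powr (- real k / 2)"
    unfolding eventually_sequentially by blast
  have "\<bar>pf_eigenvalue (adm_words r T k) (Tk_forbid r T k {w1, w2}) - pf_eigenvalue {..<r} T\<bar>
      \<le> c * pf_eigenvalue {..<r} T powr (- real k / 2)"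
    if "K \<le> k" "admissible r T (k + 1) w1" "admissible r T (k + 1) w2" for k w1 w2
    using K that by (simp add: adm_words_def card_insert_if)
  with c show ?thesis by blast
qed

end
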